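(* Let $k\ge0$ be an integer, $0<R_1<R_2<R$, $A=\{z:R_1<|z|<R_2\}\subset\Delta_R=\{|z|<R\}$, and $\omega=z^kdz$ on $\Delta_R$. Let $U\subset\mathbb C^n$ be a neighborhood of $\mathbf 0$ and $\alpha:\Delta_R\times U\to\mathbb C$, $(z,\mathbf u)\mapsto\alpha_{\mathbf u}(z)$, a holomorphic map with $\alpha_{\mathbf 0}\equiv0$, and let $\omega_{\mathbf u}=\left(z^k+\frac{\alpha_{\mathbf u}(z)}{z}\right)dz$. Let $\theta_j=e^{2\pi ij/(k+1)}$ be a $(k+1)$st root of unity, $p\in A$, and $\sigma:U\to\Delta_R$ holomorphic with $\sigma(\mathbf 0)=\theta_jp$. Then there exist a neighborhood $U_{\mathbf 0}\subset U$ of $\mathbf 0$ and a holomorphic map $\phi:A\times U_{\mathbf 0}\to\Delta_R$, $(z,\mathbf u)\mapsto\phi_{\mathbf u}(z)$, such that $\phi_{\mathbf u}^*(\omega_{\mathbf u})=\left(z^k+\frac{\alpha_{\mathbf u}(0)}{z}\right)dz$ for all $\mathbf u\in U_{\mathbf 0}$, $\phi_{\mathbf 0}(z)=\theta_jz$ for all $z\in A$, and $\phi_{\mathbf u}(p)=\sigma(\mathbf u)$ for all $\mathbf u\in U_{\mathbf 0}$. *)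

theory Defs
  imports "HOL-Analysis.Analysis"
begin

definition cscale :: "complex \<Rightarrow> complex ^ 'n \<Rightarrow> complex ^ 'n" where
  "cscale c v = (\<chi> i. c * v $ i)"

definition holo_vec :: "(complex ^ 'n \<Rightarrow> complex) \<Rightarrow> (complex ^ 'n) set \<Rightarrow> bool" where
  "holo_vec f S \<longleftrightarrow> (\<forall>x\<in>S. \<exists>L. (f has_derivative L) (at x) \<and>
       (\<forall>c v. L (cscale c v) = c * L v))"

definition holo_prod :: "(complex \<times> (complex ^ 'n) \<Rightarrow> complex) \<Rightarrow> (complex \<times> (complex ^ 'n)) set \<Rightarrow> bool" where
  "holo_prod f S \<longleftrightarrow> (\<forall>x\<in>S. \<exists>L. (f has_derivative L) (at x) \<and>
       (\<forall>c w v. L (c * w, cscale c v) = c * L (w, v)))"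

end

theory Submission
  imports Defs "HOL-Complex_Analysis.Complex_Analysis"
begin

text \<open>Write \<open>\<phi>\<^sub>u(z) = \<theta>z(1 + h)\<close>. If \<open>Q\<^sub>u\<close> is a primitive of \<open>\<omega>\<^sub>u - \<alpha>\<^sub>u(0) dw/w\<close>, the required
  identity \<open>\<phi>\<^sub>u\<^sup>*\<omega>\<^sub>u = (z\<^sup>k + \<alpha>\<^sub>u(0)/z) dz\<close> is the \<open>z\<close>-derivative of
  \<open>Q\<^sub>u(\<theta>z(1 + h)) - z\<^sup>k\<^sup>+\<^sup>1/(k+1) + \<alpha>\<^sub>u(0) log (1 + h) = c(u)\<close>.
  Writing \<open>Q\<^sub>u\<close> as an integral over a circle makes it holomorphic in \<open>(w, u)\<close>. For \<open>u\<close> near \<open>0\<close>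
  the \<open>h\<close>-derivative of the left-hand side is close to \<open>z\<^sup>k\<^sup>+\<^sup>1\<close>, so a simplified Newton map is a
  contraction and yields a unique small solution \<open>h(z, u)\<close>; it is holomorphic in \<open>(z, u)\<close> by the
  inverse function theorem, holomorphy in several variables being Frechet differentiability with a
  complex-linear derivative. The constant \<open>c(u)\<close> is chosen so that \<open>h(p, u) = \<sigma>(u)/(\<theta>p) - 1\<close>
  solves the equation at \<open>z = p\<close>, and at \<open>u = 0\<close> the solution is \<open>h = 0\<close>.\<close>

text \<open>Complex scalar multiplication on \<open>\<complex>\<close>, \<open>\<complex>\<^sup>n\<close> and their products, so that holomorphic maps
  between such spaces can be composed.\<close>
class complex_normed_vector = real_normed_vector +
  fixes scaleC :: "complex \<Rightarrow> 'a \<Rightarrow> 'a"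
  assumes scaleC_add_right: "scaleC c (x + y) = scaleC c x + scaleC c y"
    and scaleC_add_left: "scaleC (a + b) x = scaleC a x + scaleC b x"
    and scaleC_of_real: "scaleC (of_real r) x = r *\<^sub>R x"
    and scaleC_scaleC: "scaleC a (scaleC b x) = scaleC (a * b) x"
    and norm_scaleC: "norm (scaleC c x) = norm c * norm x"

instantiation complex :: complex_normed_vector
begin
definition scaleC_complex :: "complex \<Rightarrow> complex \<Rightarrow> complex" where "scaleC_complex c x = c * x"
instance by standard (auto simp: scaleC_complex_def algebra_simps norm_mult scaleR_conv_of_real)
end

instantiation vec :: (complex_normed_vector, finite) complex_normed_vector
begin
definition scaleC_vec :: "complex \<Rightarrow> ('a, 'b) vec \<Rightarrow> ('a, 'b) vec" where
  "scaleC_vec c x = (\<chi> i. scaleC c (x $ i))"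
instance
  by standard (simp_all add: scaleC_vec_def vec_eq_iff scaleC_add_right scaleC_add_left
      scaleC_of_real scaleC_scaleC norm_vec_def norm_scaleC L2_set_right_distrib)
end

instantiation prod :: (complex_normed_vector, complex_normed_vector) complex_normed_vector
begin
definition scaleC_prod :: "complex \<Rightarrow> 'a \<times> 'b \<Rightarrow> 'a \<times> 'b" where
  "scaleC_prod c x = (scaleC c (fst x), scaleC c (snd x))"
instance
  by standard (simp_all add: scaleC_prod_def scaleC_add_right scaleC_add_left scaleC_of_real
      scaleC_scaleC prod_eq_iff norm_prod_def norm_scaleC power_mult_distrib real_sqrt_mult
      flip: distrib_left)
end

lemma scaleC_complex_eq [simp]: "scaleC c (x::complex) = c * x"
  by (simp add: scaleC_complex_def)

lemma scaleC_Pair [simp]: "scaleC c (x, y) = (scaleC c x, scaleC c y)"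
  by (simp add: scaleC_prod_def)

lemma cscale_eq_scaleC: "cscale c v = scaleC c v"
  by (simp add: cscale_def scaleC_vec_def)

lemma scaleC_zero_right [simp]: "scaleC c 0 = 0"
  by (metis add_cancel_right_right scaleC_add_right)

lemma scaleC_zero_left [simp]: "scaleC 0 x = 0"
  using scaleC_of_real[of 0 x] by simp

lemma bounded_linear_scaleC_left: "bounded_linear (\<lambda>s. scaleC s (y::'a::complex_normed_vector))"
proof
  fix a b :: complex and r :: real
  show "scaleC (a + b) y = scaleC a y + scaleC b y" by (rule scaleC_add_left)
  have "scaleC (r *\<^sub>R a) y = scaleC (of_real r) (scaleC a y)"
    by (simp add: scaleC_scaleC scaleR_conv_of_real)
  then show "scaleC (r *\<^sub>R a) y = r *\<^sub>R scaleC a y" by (simp add: scaleC_of_real)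
  show "\<exists>K. \<forall>x. norm (scaleC x y) \<le> norm x * K"
    by (rule exI[of _ "norm y"]) (simp add: norm_scaleC)
qed

definition complex_linear :: "('a::complex_normed_vector \<Rightarrow> 'b::complex_normed_vector) \<Rightarrow> bool" where
  "complex_linear L \<longleftrightarrow> (\<forall>c x. L (scaleC c x) = scaleC c (L x))"

definition holo_at :: "('a::complex_normed_vector \<Rightarrow> 'b::complex_normed_vector) \<Rightarrow> 'a \<Rightarrow> bool" where
  "holo_at f x \<longleftrightarrow> (\<exists>L. (f has_derivative L) (at x) \<and> complex_linear L)"

lemma holo_prod_iff_holo_at: "holo_prod f S \<longleftrightarrow> (\<forall>x\<in>S. holo_at f x)"
  unfolding holo_prod_def holo_at_def complex_linear_def
  by (simp add: cscale_eq_scaleC split_paired_All)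

lemma holo_vec_iff_holo_at: "holo_vec f S \<longleftrightarrow> (\<forall>x\<in>S. holo_at f x)"
  unfolding holo_vec_def holo_at_def complex_linear_def
  by (simp add: cscale_eq_scaleC)

lemma complex_linear_mult_left:
  fixes L :: "'a::complex_normed_vector \<Rightarrow> complex"
  shows "complex_linear L \<Longrightarrow> L (scaleC c x) = c * L x"
  by (simp add: complex_linear_def)

lemma holo_at_const: "holo_at (\<lambda>x. c) x"
  unfolding holo_at_def complex_linear_def
  by (auto intro!: exI[of _ "\<lambda>_. 0"] derivative_eq_intros)

lemma holo_at_ident: "holo_at (\<lambda>x. x) x"
  unfolding holo_at_def complex_linear_def
  by (auto intro!: exI[of _ "\<lambda>x. x"] derivative_eq_intros)

lemma holo_at_compose:
  assumes "holo_at f x" "holo_at g (f x)"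
  shows "holo_at (\<lambda>x. g (f x)) x"
proof -
  obtain F G where F: "(f has_derivative F) (at x)" "complex_linear F"
    and G: "(g has_derivative G) (at (f x))" "complex_linear G"
    using assms unfolding holo_at_def by blast
  have "((\<lambda>x. g (f x)) has_derivative (\<lambda>y. G (F y))) (at x)"
    using has_derivative_compose[OF F(1) G(1)] by (simp add: o_def)
  moreover have "complex_linear (\<lambda>y. G (F y))"
    using F(2) G(2) by (simp add: complex_linear_def)
  ultimately show ?thesis unfolding holo_at_def by blast
qed

lemma holo_at_fst: "holo_at f x \<Longrightarrow> holo_at (\<lambda>x. fst (f x)) x"
  unfolding holo_at_def complex_linear_def
  by (auto intro!: has_derivative_fst simp: scaleC_prod_def)

lemma holo_at_snd: "holo_at f x \<Longrightarrow> holo_at (\<lambda>x. snd (f x)) x"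
  unfolding holo_at_def complex_linear_def
  by (auto intro!: has_derivative_snd simp: scaleC_prod_def)

lemma holo_at_Pair:
  assumes "holo_at f x" "holo_at g x"
  shows "holo_at (\<lambda>x. (f x, g x)) x"
  using assms unfolding holo_at_def complex_linear_def
  by (auto intro!: has_derivative_Pair)

lemma holo_at_compose_field:
  fixes f :: "'a::complex_normed_vector \<Rightarrow> complex"
  assumes "(g has_field_derivative d) (at (f x))" "holo_at f x"
  shows "holo_at (\<lambda>x. g (f x)) x"
proof -
  have "holo_at g (f x)"
    using assms(1) unfolding holo_at_def complex_linear_def has_field_derivative_def
    by (auto simp: algebra_simps)
  then show ?thesis by (rule holo_at_compose[OF assms(2)])
qed

lemma holo_at_add:
  fixes f g :: "'a::complex_normed_vector \<Rightarrow> complex"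
  assumes "holo_at f x" "holo_at g x"
  shows "holo_at (\<lambda>x. f x + g x) x"
  using assms unfolding holo_at_def complex_linear_def
  by (auto intro!: has_derivative_add simp: algebra_simps)

lemma holo_at_mult:
  fixes f g :: "'a::complex_normed_vector \<Rightarrow> complex"
  assumes "holo_at f x" "holo_at g x"
  shows "holo_at (\<lambda>x. f x * g x) x"
  using assms unfolding holo_at_def complex_linear_def
  by (auto intro!: has_derivative_mult simp: algebra_simps)

lemma holo_at_diff:
  fixes f g :: "'a::complex_normed_vector \<Rightarrow> complex"
  assumes "holo_at f x" "holo_at g x"
  shows "holo_at (\<lambda>x. f x - g x) x"
  using holo_at_add[OF assms(1) holo_at_mult[OF holo_at_const assms(2)], of "-1"] by simp

lemma holo_at_power:
  fixes f :: "'a::complex_normed_vector \<Rightarrow> complex"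
  shows "holo_at f x \<Longrightarrow> holo_at (\<lambda>x. f x ^ m) x"
  by (rule holo_at_compose_field[where g="\<lambda>w. w ^ m"]) (auto intro!: derivative_eq_intros)

lemma holo_at_divide_const:
  fixes f :: "'a::complex_normed_vector \<Rightarrow> complex"
  shows "holo_at f x \<Longrightarrow> holo_at (\<lambda>x. f x / c) x"
  using holo_at_mult[OF _ holo_at_const, of f x "inverse c"] by (simp add: divide_inverse)

lemma holo_at_Ln:
  fixes f :: "'a::complex_normed_vector \<Rightarrow> complex"
  shows "holo_at f x \<Longrightarrow> f x \<notin> \<real>\<^sub>\<le>\<^sub>0 \<Longrightarrow> holo_at (\<lambda>x. Ln (f x)) x"
  by (rule holo_at_compose_field[OF has_field_derivative_Ln])

lemma holo_at_imp_continuous: "holo_at f x \<Longrightarrow> continuous (at x) f"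
  unfolding holo_at_def using has_derivative_continuous by blast

lemma holo_at_imp_continuous_on: "(\<And>x. x \<in> S \<Longrightarrow> holo_at f x) \<Longrightarrow> continuous_on S f"
  by (simp add: continuous_at_imp_continuous_on holo_at_imp_continuous)

lemma holo_at_transform_open:
  assumes "holo_at f x" "open S" "x \<in> S" "\<And>y. y \<in> S \<Longrightarrow> g y = f y"
  shows "holo_at g x"
  using assms has_derivative_transform_within_open unfolding holo_at_def by metis

definition cderiv :: "('a::complex_normed_vector \<Rightarrow> 'b::complex_normed_vector) \<Rightarrow> 'a \<Rightarrow> 'a \<Rightarrow> 'b" where
  "cderiv f x = (SOME L. (f has_derivative L) (at x) \<and> complex_linear L)"

lemma holo_at_cderiv:
  assumes "holo_at f x"
  shows "(f has_derivative cderiv f x) (at x)" "complex_linear (cderiv f x)"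
    "bounded_linear (cderiv f x)"
proof -
  have "(f has_derivative cderiv f x) (at x) \<and> complex_linear (cderiv f x)"
    using assms unfolding holo_at_def cderiv_def by (rule someI_ex)
  then show "(f has_derivative cderiv f x) (at x)" "complex_linear (cderiv f x)"
    "bounded_linear (cderiv f x)"
    using has_derivative_bounded_linear by auto
qed

lemma has_field_derivative_along_line:
  fixes f :: "'a::complex_normed_vector \<Rightarrow> complex"
  assumes "holo_at f (x + scaleC s y)"
  shows "((\<lambda>s. f (x + scaleC s y)) has_field_derivative cderiv f (x + scaleC s y) y) (at s)"
proof -
  have "((\<lambda>s. x + scaleC s y) has_derivative (\<lambda>t. scaleC t y)) (at s)"
    using bounded_linear_imp_has_derivative[OF bounded_linear_scaleC_left[of y]]
    by (auto intro!: derivative_eq_intros)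
  from has_derivative_compose[OF this holo_at_cderiv(1)[OF assms]]
  have "((\<lambda>s. f (x + scaleC s y)) has_derivative (\<lambda>t. cderiv f (x + scaleC s y) y * t)) (at s)"
    using complex_linear_mult_left[OF holo_at_cderiv(2)[OF assms]] by (simp add: o_def mult.commute)
  then show ?thesis
    by (simp add: has_field_derivative_def)
qed

lemma holo_at_has_field_derivative_fst:
  fixes f :: "complex \<times> 'a::complex_normed_vector \<Rightarrow> complex"
  assumes "holo_at f (w, u)"
  shows "((\<lambda>w. f (w, u)) has_field_derivative cderiv f (w, u) (1, 0)) (at w)"
  using has_field_derivative_along_line[of f "(0, u)" w "(1, 0)"] assms by simp

lemma cderiv_diff_le_Cauchy:
  fixes f :: "'a::complex_normed_vector \<Rightarrow> complex"
  assumes hol: "\<And>v. v \<in> ball x0 (2 * \<rho>) \<Longrightarrow> holo_at f v"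
    and \<rho>: "0 < \<rho>" and x: "dist x x0 < \<rho>" and y: "norm y = 1"
    and bound: "\<And>s. norm s = \<rho> \<Longrightarrow> norm (f (x + scaleC s y) - f (x0 + scaleC s y)) \<le> M"
  shows "norm (cderiv f x y - cderiv f x0 y) \<le> M / \<rho>"
proof -
  define g where "g s = f (x + scaleC s y) - f (x0 + scaleC s y)" for s
  have in_ball: "x' + scaleC s y \<in> ball x0 (2 * \<rho>)" if "dist x' x0 < \<rho>" "norm s \<le> \<rho>" for x' s
  proof -
    have "dist (x' + scaleC s y) x0 \<le> dist x' x0 + norm (scaleC s y)"
      using norm_triangle_ineq[of "x' - x0" "scaleC s y"] by (simp add: dist_norm algebra_simps)
    also have "\<dots> < 2 * \<rho>" using that by (simp add: norm_scaleC y)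
    finally show ?thesis by (simp add: dist_commute)
  qed
  have "dist x0 x0 < \<rho>" using \<rho> by simp
  then have g': "(g has_field_derivative cderiv f (x + scaleC s y) y - cderiv f (x0 + scaleC s y) y) (at s)"
    if "norm s \<le> \<rho>" for s
    unfolding g_def using that x
    by (intro DERIV_diff has_field_derivative_along_line hol in_ball)
  have "g holomorphic_on ball 0 \<rho>"
    unfolding holomorphic_on_def field_differentiable_def
    using g' by (meson has_field_derivative_at_within less_imp_le mem_ball_0)
  moreover have "continuous_on (cball 0 \<rho>) g"
    using g' by (meson DERIV_isCont continuous_at_imp_continuous_on mem_cball_0)
  ultimately have "norm ((deriv ^^ 1) g 0) \<le> fact 1 * M / \<rho> ^ 1"
    by (rule Cauchy_inequality[OF _ _ \<rho>]) (simp add: g_def bound)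
  moreover have "deriv g 0 = cderiv f x y - cderiv f x0 y"
    using DERIV_imp_deriv[OF g'[of 0]] \<rho> by simp
  ultimately show ?thesis by simp
qed

lemma norm_Blinfun_diff_le:
  fixes A B :: "'a::real_normed_vector \<Rightarrow> 'b::real_normed_vector"
  assumes A: "bounded_linear A" and B: "bounded_linear B" and "0 \<le> c"
    and unit: "\<And>y. norm y = 1 \<Longrightarrow> norm (A y - B y) \<le> c"
  shows "norm (Blinfun A - Blinfun B) \<le> c"
proof (rule norm_blinfun_bound)
  fix y
  show "norm (blinfun_apply (Blinfun A - Blinfun B) y) \<le> c * norm y"
  proof (cases "y = 0")
    case True
    then show ?thesis using A B by (simp add: bounded_linear_Blinfun_apply blinfun.diff_left linear_simps)
  next
    case False
    define y1 where "y1 = (1 / norm y) *\<^sub>R y"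
    have y1: "norm y1 = 1" and yy: "y = norm y *\<^sub>R y1" using False by (simp_all add: y1_def)
    have "A y - B y = norm y *\<^sub>R (A y1 - B y1)"
      using A B by (subst (1 2) yy) (simp add: linear_simps scaleR_diff_right)
    then have "norm (A y - B y) = norm y * norm (A y1 - B y1)" by simp
    also have "\<dots> \<le> norm y * c" using unit[OF y1] by (simp add: mult_left_mono)
    finally show ?thesis
      using A B by (simp add: bounded_linear_Blinfun_apply blinfun.diff_left mult.commute)
  qed
qed fact

text \<open>Compare the two derivatives along a complex line by the one-variable Cauchy estimate.\<close>
lemma continuous_on_cderiv:
  fixes f :: "'a::{complex_normed_vector,heine_borel} \<Rightarrow> complex"
  assumes S: "open S" and hol: "\<And>x. x \<in> S \<Longrightarrow> holo_at f x"
  shows "continuous_on S (\<lambda>x. Blinfun (cderiv f x))"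
  unfolding continuous_on_iff
proof (intro ballI allI impI)
  fix x0 and e :: real assume x0: "x0 \<in> S" and e: "e > 0"
  obtain \<epsilon> where "\<epsilon> > 0" "cball x0 \<epsilon> \<subseteq> S"
    using S x0 open_contains_cball by blast
  then obtain \<rho> where \<rho>: "\<rho> > 0" "cball x0 (2 * \<rho>) \<subseteq> S"
    by (intro that[of "\<epsilon> / 2"]) auto
  have "uniformly_continuous_on (cball x0 (2 * \<rho>)) f"
    using holo_at_imp_continuous_on[of "cball x0 (2 * \<rho>)" f] hol \<rho>
    by (intro compact_uniformly_continuous compact_cball) blast
  then obtain d where d: "d > 0" "\<And>a b. a \<in> cball x0 (2 * \<rho>) \<Longrightarrow> b \<in> cball x0 (2 * \<rho>) \<Longrightarrow>
      dist a b < d \<Longrightarrow> dist (f a) (f b) < e * \<rho> / 2"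
    unfolding uniformly_continuous_on_def using e \<rho> by (metis half_gt_zero mult_pos_pos)
  show "\<exists>d>0. \<forall>x\<in>S. dist x x0 < d \<longrightarrow> dist (Blinfun (cderiv f x)) (Blinfun (cderiv f x0)) < e"
  proof (intro exI[of _ "min \<rho> d"] conjI ballI impI)
    fix x assume "x \<in> S" and x: "dist x x0 < min \<rho> d"
    have "norm (cderiv f x y - cderiv f x0 y) \<le> e / 2" if y: "norm y = 1" for y
    proof -
      have bound: "norm (f (x + scaleC s y) - f (x0 + scaleC s y)) \<le> e * \<rho> / 2"
        if s: "norm s = \<rho>" for s
      proof -
        have "x + scaleC s y \<in> cball x0 (2 * \<rho>)" "x0 + scaleC s y \<in> cball x0 (2 * \<rho>)"
          using x s y \<rho> norm_triangle_ineq[of "x - x0" "scaleC s y"]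
          by (simp_all add: dist_norm norm_scaleC algebra_simps norm_minus_commute)
        moreover have "dist (x + scaleC s y) (x0 + scaleC s y) < d"
          using x by (simp add: dist_norm)
        ultimately show ?thesis
          using d(2) by (fastforce simp: dist_norm)
      qed
      have "norm (cderiv f x y - cderiv f x0 y) \<le> e * \<rho> / 2 / \<rho>"
        using \<rho> x by (intro cderiv_diff_le_Cauchy[OF _ \<rho>(1) _ y bound] hol) auto
      then show ?thesis using \<rho> by simp
    qed
    then have "norm (Blinfun (cderiv f x) - Blinfun (cderiv f x0)) \<le> e / 2"
      using hol \<open>x \<in> S\<close> x0 e by (intro norm_Blinfun_diff_le holo_at_cderiv(3)) auto
    then show "dist (Blinfun (cderiv f x)) (Blinfun (cderiv f x0)) < e"
      using e by (simp add: dist_norm)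
  qed (use \<rho> d in simp)
qed

lemma norm_circlepath_0 [simp]: "0 \<le> \<rho> \<Longrightarrow> norm (circlepath 0 \<rho> t) = \<rho>"
  by (simp add: circlepath norm_mult)

lemma continuous_on_circlepath_compose [continuous_intros]:
  "continuous_on S f \<Longrightarrow> continuous_on S (\<lambda>x. circlepath z \<rho> (f x))"
  unfolding circlepath by (intro continuous_intros)

lemma has_integral_circlepath_divided_difference:
  assumes hol: "a holomorphic_on ball 0 R" and \<rho>: "0 < \<rho>" "\<rho> < R"
    and w: "norm w < \<rho>" "w \<noteq> 0"
  shows "((\<lambda>t. a (circlepath 0 \<rho> t) / (circlepath 0 \<rho> t - w)) has_integral (a w - a 0) / w) {0..1}"
proof -
  let ?\<gamma> = "circlepath 0 \<rho>"
  have hol': "a holomorphic_on ball 0 \<rho>"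
    using holomorphic_on_subset[OF hol] \<rho> by (simp add: subset_ball)
  have cont: "continuous_on (cball 0 \<rho>) a"
    using continuous_on_subset[OF holomorphic_on_imp_continuous_on[OF hol]] \<rho>
    by (simp add: cball_subset_ball_iff)
  have "((\<lambda>\<zeta>. a \<zeta> / (\<zeta> - w)) has_contour_integral (2 * of_real pi * \<i> * a w)) ?\<gamma>"
    by (rule Cauchy_integral_circlepath[OF cont hol']) (use w in simp)
  moreover have "((\<lambda>\<zeta>. a \<zeta> / (\<zeta> - 0)) has_contour_integral (2 * of_real pi * \<i> * a 0)) ?\<gamma>"
    by (rule Cauchy_integral_circlepath[OF cont hol']) (use \<rho> in simp)
  ultimately have "((\<lambda>\<zeta>. (a \<zeta> / (\<zeta> - w) - a \<zeta> / (\<zeta> - 0)) / w) has_contour_integral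
      (2 * of_real pi * \<i> * a w - 2 * of_real pi * \<i> * a 0) / w) ?\<gamma>"
    by (intro has_contour_integral_div has_contour_integral_diff)
  moreover have "(a (?\<gamma> t) / (?\<gamma> t - w) - a (?\<gamma> t) / (?\<gamma> t - 0)) / w *
      vector_derivative ?\<gamma> (at t within {0..1}) = 2 * of_real pi * \<i> * (a (?\<gamma> t) / (?\<gamma> t - w))"
    if "t \<in> {0..1}" for t
  proof -
    have "norm (?\<gamma> t) = \<rho>" using \<rho> by simp
    then have "?\<gamma> t \<noteq> 0" "?\<gamma> t - w \<noteq> 0"
      using \<rho> w by (auto simp del: norm_circlepath_0)
    moreover have "vector_derivative ?\<gamma> (at t within {0..1}) = 2 * of_real pi * \<i> * ?\<gamma> t"
      using that vector_derivative_circlepath01[of t 0 \<rho>] by (simp add: circlepath)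
    moreover have "(A / (g - w) - A / (g - 0)) / w * (c * g) = c * (A / (g - w))"
      if "g \<noteq> 0" "g - w \<noteq> 0" for A g c :: complex
      using that w by (simp add: field_simps)
    ultimately show ?thesis by simp
  qed
  ultimately have "((\<lambda>t. 2 * of_real pi * \<i> * (a (?\<gamma> t) / (?\<gamma> t - w))) has_integral
      (2 * of_real pi * \<i> * a w - 2 * of_real pi * \<i> * a 0) / w) {0..1}"
    unfolding has_contour_integral_def by (rule has_integral_eq[rotated])
  moreover have "(2 * of_real pi * \<i> * a w - 2 * of_real pi * \<i> * a 0) / w
      = 2 * of_real pi * \<i> * ((a w - a 0) / w)"
    by (simp add: right_diff_distrib)
  ultimately have "((\<lambda>t. 2 * of_real pi * \<i> * (a (?\<gamma> t) / (?\<gamma> t - w))) has_integral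
      2 * of_real pi * \<i> * ((a w - a 0) / w)) {0..1}"
    by (simp only:)
  then show ?thesis
    by (subst (asm) has_integral_mult_right_iff) auto
qed

lemma holo_at_integral:
  fixes f :: "'a::{complex_normed_vector,banach} \<Rightarrow> real \<Rightarrow> complex"
  assumes U: "open U" "convex U" "x \<in> U"
    and f': "\<And>x t. x \<in> U \<Longrightarrow> t \<in> cbox a b \<Longrightarrow>
      ((\<lambda>x. f x t) has_derivative blinfun_apply (f' x t)) (at x)"
    and lin: "\<And>x t. x \<in> U \<Longrightarrow> t \<in> cbox a b \<Longrightarrow> complex_linear (blinfun_apply (f' x t))"
    and int: "\<And>x. x \<in> U \<Longrightarrow> f x integrable_on cbox a b"
    and cont: "continuous_on (U \<times> cbox a b) (\<lambda>(x, t). f' x t)"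
  shows "((\<lambda>x. integral (cbox a b) (f x)) has_derivative
      blinfun_apply (integral (cbox a b) (f' x))) (at x)" (is ?deriv)
    and "holo_at (\<lambda>x. integral (cbox a b) (f x)) x"
proof -
  have "((\<lambda>x. integral (cbox a b) (f x)) has_derivative
      blinfun_apply (integral (cbox a b) (f' x))) (at x within U)"
    by (rule leibniz_rule[where fx=f']) (use U f' int cont in \<open>auto intro: has_derivative_at_withinI\<close>)
  then show ?deriv
    using at_within_open[OF U(3,1)] by simp
  have "continuous_on (cbox a b) (\<lambda>t. (\<lambda>(x, t). f' x t) (x, t))"
    by (rule continuous_on_compose2[OF cont]) (use U in \<open>auto intro!: continuous_intros\<close>)
  then have int': "f' x integrable_on cbox a b"
    by (simp add: integrable_continuous_real)
  have "complex_linear (blinfun_apply (integral (cbox a b) (f' x)))"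
    unfolding complex_linear_def
  proof (intro allI)
    fix c y
    have "blinfun_apply (f' x t) (scaleC c y) = c * blinfun_apply (f' x t) y" if "t \<in> cbox a b" for t
      using lin[OF U(3) that] by (simp add: complex_linear_def)
    then have "integral (cbox a b) (\<lambda>t. f' x t (scaleC c y)) = integral (cbox a b) (\<lambda>t. c * f' x t y)"
      by (intro integral_cong) auto
    then show "blinfun_apply (integral (cbox a b) (f' x)) (scaleC c y) =
        scaleC c (blinfun_apply (integral (cbox a b) (f' x)) y)"
      unfolding blinfun_apply_integral[OF int'] by simp
  qed
  with \<open>?deriv\<close> show "holo_at (\<lambda>x. integral (cbox a b) (f x)) x"
    unfolding holo_at_def by blast
qed

text \<open>\<open>divdiff_primitive \<alpha> \<rho> (w, u)\<close> is \<open>-(1/2\<pi>i) \<ointegral> \<alpha>(\<zeta>, u) log (1 - w/\<zeta>) d\<zeta>/\<zeta>\<close> over \<open>|\<zeta>| = \<rho>\<close>;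
  differentiating under the integral and the Cauchy formula show that it is a primitive in \<open>w\<close> of
  \<open>(\<alpha>(w, u) - \<alpha>(0, u)) / w\<close>, and it is holomorphic in \<open>(w, u)\<close>.\<close>
definition divdiff_primitive :: "(complex \<times> 'v \<Rightarrow> complex) \<Rightarrow> real \<Rightarrow> complex \<times> 'v \<Rightarrow> complex" where
  "divdiff_primitive \<alpha> \<rho> x =
     integral {0..1} (\<lambda>t. - \<alpha> (circlepath 0 \<rho> t, snd x) * Ln (1 - fst x / circlepath 0 \<rho> t))"

text \<open>A primitive of \<open>\<omega>\<^sub>u - \<alpha>\<^sub>u(0) dw/w\<close>.\<close>
definition omega_primitive :: "(complex \<times> 'v \<Rightarrow> complex) \<Rightarrow> real \<Rightarrow> nat \<Rightarrow> complex \<times> 'v \<Rightarrow> complex" where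
  "omega_primitive \<alpha> \<rho> k x = fst x ^ (k + 1) / of_nat (k + 1) + divdiff_primitive \<alpha> \<rho> x"

text \<open>The integration constant for which \<open>\<phi>\<^sub>u(p) = \<sigma>(u)\<close> solves the equation for \<open>\<phi>\<^sub>u\<close> at \<open>z = p\<close>.\<close>
definition normalizing_constant ::
    "(complex \<times> 'v \<Rightarrow> complex) \<Rightarrow> real \<Rightarrow> nat \<Rightarrow> ('v \<Rightarrow> complex) \<Rightarrow> complex \<Rightarrow> complex \<Rightarrow> 'v \<Rightarrow> complex"
  where "normalizing_constant \<alpha> \<rho> k \<sigma> \<theta> p u =
    omega_primitive \<alpha> \<rho> k (\<sigma> u, u) - p ^ (k + 1) / of_nat (k + 1) + \<alpha> (0, u) * Ln (\<sigma> u / (\<theta> * p))"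

lemma one_minus_notin_nonpos_Reals: "norm (q::complex) < 1 \<Longrightarrow> 1 - q \<notin> \<real>\<^sub>\<le>\<^sub>0"
  using abs_Re_le_cmod[of q] by (auto simp: complex_nonpos_Reals_iff)

locale holomorphic_family =
  fixes \<alpha> :: "complex \<times> (complex ^ 'n::finite) \<Rightarrow> complex" and R \<rho> \<delta> :: real
    and U :: "(complex ^ 'n) set"
  assumes open_U: "open U" and holo_\<alpha>: "\<And>x. x \<in> ball 0 R \<times> U \<Longrightarrow> holo_at \<alpha> x"
    and \<rho>: "0 < \<rho>" "\<rho> < R" and \<delta>: "0 < \<delta>" "ball 0 \<delta> \<subseteq> U"
begin

abbreviation D :: "(complex \<times> (complex ^ 'n)) set" where
  "D \<equiv> ball 0 \<rho> \<times> ball 0 \<delta>"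

abbreviation \<gamma> :: "real \<Rightarrow> complex" where
  "\<gamma> \<equiv> circlepath 0 \<rho>"

lemma \<gamma>_nonzero: "\<gamma> t \<noteq> 0"
  using norm_circlepath_0[of \<rho> t] \<rho> by (auto simp del: norm_circlepath_0)

lemma \<gamma>_in_domain: "u \<in> ball 0 \<delta> \<Longrightarrow> (\<gamma> t, u) \<in> ball 0 R \<times> U"
  using \<rho> \<delta> by auto

lemma holo_at_\<alpha>_\<gamma>: "u \<in> ball 0 \<delta> \<Longrightarrow> holo_at \<alpha> (\<gamma> t, u)"
  using holo_\<alpha> \<gamma>_in_domain by blast

lemma norm_ratio_less_1: "x \<in> D \<Longrightarrow> norm (fst x / \<gamma> t) < 1"
  using \<rho> by (auto simp: norm_divide divide_less_eq)

lemma continuous_on_\<alpha>: "continuous_on (ball 0 R \<times> U) \<alpha>"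
  using holo_\<alpha> by (rule holo_at_imp_continuous_on)

lemma continuous_on_\<alpha>_\<gamma>: "continuous_on (D \<times> cbox 0 1) (\<lambda>(x, t). \<alpha> (\<gamma> t, snd x))"
proof -
  have "continuous_on (D \<times> cbox 0 1) (\<lambda>(x, t). (\<gamma> t, snd x))"
    by (auto intro!: continuous_intros simp: split_beta)
  moreover have "(\<lambda>(x, t). (\<gamma> t, snd x)) ` (D \<times> cbox 0 1) \<subseteq> ball 0 R \<times> U"
    using \<gamma>_in_domain by auto
  ultimately show ?thesis
    using continuous_on_compose2[OF continuous_on_\<alpha>] by (simp add: split_beta)
qed

lemma continuous_on_Ln_\<gamma>: "continuous_on (D \<times> cbox 0 1) (\<lambda>(x, t). Ln (1 - fst x / \<gamma> t))"
  unfolding split_beta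
  using \<gamma>_nonzero one_minus_notin_nonpos_Reals norm_ratio_less_1
  by (intro continuous_intros) auto

definition integrand_deriv :: "complex \<times> (complex ^ 'n) \<Rightarrow> real \<Rightarrow> (complex \<times> (complex ^ 'n)) \<Rightarrow>\<^sub>L complex" where
  "integrand_deriv x t =
     (blinfun_mult_right (- Ln (1 - fst x / \<gamma> t)) o\<^sub>L
       (Blinfun (cderiv \<alpha> (\<gamma> t, snd x)) o\<^sub>L Blinfun (\<lambda>y. (0, snd y))))
   + (blinfun_mult_right (\<alpha> (\<gamma> t, snd x) / (\<gamma> t - fst x)) o\<^sub>L Blinfun fst)"

lemma integrand_deriv_apply:
  assumes "x \<in> D"
  shows "blinfun_apply (integrand_deriv x t) y =
     - Ln (1 - fst x / \<gamma> t) * cderiv \<alpha> (\<gamma> t, snd x) (0, snd y)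
     + \<alpha> (\<gamma> t, snd x) / (\<gamma> t - fst x) * fst y"
proof -
  have "bounded_linear (cderiv \<alpha> (\<gamma> t, snd x))"
    using holo_at_cderiv(3)[OF holo_at_\<alpha>_\<gamma>] assms by auto
  moreover have "bounded_linear (\<lambda>y::complex \<times> (complex ^ 'n). (0::complex, snd y))"
    by (intro bounded_linear_Pair bounded_linear_zero bounded_linear_snd)
  ultimately show ?thesis
    unfolding integrand_deriv_def
    by (simp add: bounded_linear_Blinfun_apply blinfun.add_left bounded_linear_fst)
qed

lemma continuous_on_integrand_deriv: "continuous_on (D \<times> cbox 0 1) (\<lambda>(x, t). integrand_deriv x t)"
proof -
  have "continuous_on (ball 0 R \<times> U) (\<lambda>x. Blinfun (cderiv \<alpha> x))"
    using continuous_on_cderiv[OF _ holo_\<alpha>] open_U by (simp add: open_Times)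
  moreover have "continuous_on (D \<times> cbox 0 1) (\<lambda>(x, t). (\<gamma> t, snd x))"
    by (auto intro!: continuous_intros simp: split_beta)
  moreover have "(\<lambda>(x, t). (\<gamma> t, snd x)) ` (D \<times> cbox 0 1) \<subseteq> ball 0 R \<times> U"
    using \<gamma>_in_domain by auto
  ultimately have D\<alpha>: "continuous_on (D \<times> cbox 0 1) (\<lambda>(x, t). Blinfun (cderiv \<alpha> (\<gamma> t, snd x)))"
    using continuous_on_compose2 by (simp add: split_beta)
  have "\<gamma> t - fst x \<noteq> 0" if "(x, t) \<in> D \<times> cbox 0 1" for x t
    using that norm_ratio_less_1[of x t] \<gamma>_nonzero[of t] by (auto simp: norm_divide)
  with continuous_on_\<alpha>_\<gamma>
  have quot: "continuous_on (D \<times> cbox 0 1) (\<lambda>(x, t). \<alpha> (\<gamma> t, snd x) / (\<gamma> t - fst x))"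
    unfolding split_beta by (intro continuous_intros) auto
  have mult_right: "continuous_on S (\<lambda>x. blinfun_mult_right (f x))" if "continuous_on S f"
    for S and f :: "_ \<Rightarrow> complex"
    using bounded_linear.continuous_on[OF bounded_linear_blinfun_mult_right that] .
  show ?thesis
    unfolding integrand_deriv_def split_beta
    using continuous_on_Ln_\<gamma> D\<alpha> quot
    by (intro continuous_on_add continuous_on_minus mult_right continuous_on_const
        bounded_bilinear.continuous_on[OF bounded_bilinear_blinfun_compose])
      (simp_all add: split_beta)
qed

lemma has_derivative_integrand:
  assumes x: "x \<in> D"
  shows "((\<lambda>x. - \<alpha> (\<gamma> t, snd x) * Ln (1 - fst x / \<gamma> t)) has_derivative
      blinfun_apply (integrand_deriv x t)) (at x)"
proof -
  have h\<alpha>: "holo_at \<alpha> (\<gamma> t, snd x)" using holo_at_\<alpha>_\<gamma> x by auto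
  have "((\<lambda>x. (\<gamma> t, snd x)) has_derivative (\<lambda>y. (0, snd y))) (at x)"
    by (auto intro!: derivative_eq_intros)
  from has_derivative_compose[OF this holo_at_cderiv(1)[OF h\<alpha>]]
  have d\<alpha>: "((\<lambda>x. \<alpha> (\<gamma> t, snd x)) has_derivative (\<lambda>y. cderiv \<alpha> (\<gamma> t, snd x) (0, snd y))) (at x)"
    by (simp add: o_def)
  have "1 - fst x / \<gamma> t \<notin> \<real>\<^sub>\<le>\<^sub>0"
    using one_minus_notin_nonpos_Reals norm_ratio_less_1 x by blast
  have "((\<lambda>x. 1 - fst x / \<gamma> t) has_derivative (\<lambda>y. - fst y / \<gamma> t)) (at x)"
    using \<gamma>_nonzero[of t] by (auto intro!: derivative_eq_intros)
  from has_derivative_compose[OF this has_field_derivative_Ln[OF \<open>1 - fst x / \<gamma> t \<notin> \<real>\<^sub>\<le>\<^sub>0\<close>,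
        unfolded has_field_derivative_def]]
  have dLn: "((\<lambda>x. Ln (1 - fst x / \<gamma> t)) has_derivative
      (\<lambda>y. inverse (1 - fst x / \<gamma> t) * (- fst y / \<gamma> t))) (at x)"
    by (simp add: o_def)
  have "\<gamma> t - fst x \<noteq> 0"
    using norm_ratio_less_1[OF x, of t] \<gamma>_nonzero[of t] by (auto simp: norm_divide)
  then have e: "inverse (1 - fst x / \<gamma> t) * (- fst y / \<gamma> t) = - (fst y / (\<gamma> t - fst x))" for y
    using \<gamma>_nonzero[of t] by (simp add: field_simps)
  have "((\<lambda>x. - (\<alpha> (\<gamma> t, snd x) * Ln (1 - fst x / \<gamma> t))) has_derivative
      (\<lambda>y. - (\<alpha> (\<gamma> t, snd x) * (inverse (1 - fst x / \<gamma> t) * (- fst y / \<gamma> t)) +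
             cderiv \<alpha> (\<gamma> t, snd x) (0, snd y) * Ln (1 - fst x / \<gamma> t)))) (at x)"
    by (intro has_derivative_minus has_derivative_mult d\<alpha> dLn)
  moreover have "(\<lambda>y. - (\<alpha> (\<gamma> t, snd x) * (inverse (1 - fst x / \<gamma> t) * (- fst y / \<gamma> t)) +
             cderiv \<alpha> (\<gamma> t, snd x) (0, snd y) * Ln (1 - fst x / \<gamma> t))) = blinfun_apply (integrand_deriv x t)"
    unfolding e integrand_deriv_apply[OF x] by (simp add: algebra_simps)
  ultimately show ?thesis by simp
qed

lemma complex_linear_integrand_deriv:
  assumes x: "x \<in> D"
  shows "complex_linear (blinfun_apply (integrand_deriv x t))"
  unfolding complex_linear_def
proof (intro allI)
  fix c and y :: "complex \<times> (complex ^ 'n)"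
  have "cderiv \<alpha> (\<gamma> t, snd x) (0, scaleC c (snd y)) = c * cderiv \<alpha> (\<gamma> t, snd x) (0, snd y)"
    using complex_linear_mult_left[OF holo_at_cderiv(2)[OF holo_at_\<alpha>_\<gamma>], of "snd x" t c "(0, snd y)"] x
    by auto
  then show "blinfun_apply (integrand_deriv x t) (scaleC c y) = scaleC c (blinfun_apply (integrand_deriv x t) y)"
    by (simp add: integrand_deriv_apply[OF x] scaleC_prod_def algebra_simps)
qed

lemma integrable_integrand:
  assumes "x \<in> D"
  shows "(\<lambda>t. - \<alpha> (\<gamma> t, snd x) * Ln (1 - fst x / \<gamma> t)) integrable_on cbox 0 1"
proof -
  have "continuous_on (D \<times> cbox 0 1) (\<lambda>(x, t). - \<alpha> (\<gamma> t, snd x) * Ln (1 - fst x / \<gamma> t))"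
    using continuous_on_mult[OF continuous_on_minus[OF continuous_on_\<alpha>_\<gamma>] continuous_on_Ln_\<gamma>]
    by (simp add: split_beta)
  then have "continuous_on (cbox 0 1) (\<lambda>t. (\<lambda>(x, t). - \<alpha> (\<gamma> t, snd x) * Ln (1 - fst x / \<gamma> t)) (x, t))"
    by (rule continuous_on_compose2) (use assms in \<open>auto intro!: continuous_intros\<close>)
  then show ?thesis by (simp add: integrable_continuous_real)
qed

lemma integrable_integrand_deriv:
  assumes "x \<in> D"
  shows "integrand_deriv x integrable_on cbox 0 1"
proof -
  have "continuous_on (cbox 0 1) (\<lambda>t. (\<lambda>(x, t). integrand_deriv x t) (x, t))"
    by (rule continuous_on_compose2[OF continuous_on_integrand_deriv])
      (use assms in \<open>auto intro!: continuous_intros\<close>)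
  then show ?thesis by (simp add: integrable_continuous_real)
qed

lemma divdiff_primitive_has_derivative:
  "x \<in> D \<Longrightarrow> (divdiff_primitive \<alpha> \<rho> has_derivative
     blinfun_apply (integral (cbox 0 1) (integrand_deriv x))) (at x)"
  and holo_at_divdiff_primitive: "x \<in> D \<Longrightarrow> holo_at (divdiff_primitive \<alpha> \<rho>) x"
  using holo_at_integral[OF _ _ _ has_derivative_integrand complex_linear_integrand_deriv
      integrable_integrand continuous_on_integrand_deriv]
  by (simp_all add: divdiff_primitive_def[abs_def] open_Times convex_Times)

lemma has_field_derivative_divdiff_primitive:
  assumes x: "(w, u) \<in> D" and "w \<noteq> 0"
  shows "((\<lambda>w. divdiff_primitive \<alpha> \<rho> (w, u)) has_field_derivative (\<alpha> (w, u) - \<alpha> (0, u)) / w) (at w)"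
proof -
  have "cderiv \<alpha> (\<gamma> t, u) (0, 0) = 0" for t
    using linear_0[OF bounded_linear.linear[OF holo_at_cderiv(3)[OF holo_at_\<alpha>_\<gamma>]]] x
    by (simp add: zero_prod_def)
  then have "blinfun_apply (integral (cbox 0 1) (integrand_deriv (w, u))) (s, 0) =
      integral (cbox 0 1) (\<lambda>t. \<alpha> (\<gamma> t, u) / (\<gamma> t - w) * s)" for s
    unfolding blinfun_apply_integral[OF integrable_integrand_deriv[OF x]]
    by (simp add: integrand_deriv_apply[OF x])
  then have "blinfun_apply (integral (cbox 0 1) (integrand_deriv (w, u))) (s, 0) =
      integral {0..1} (\<lambda>t. \<alpha> (\<gamma> t, u) / (\<gamma> t - w)) * s" for s
    by (simp only: cbox_interval integral_mult_left)
  moreover have "((\<lambda>w. (w, u)) has_derivative (\<lambda>s. (s, 0))) (at w)"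
    by (auto intro!: derivative_eq_intros)
  note has_derivative_compose[OF this divdiff_primitive_has_derivative[OF x]]
  ultimately have "((\<lambda>w. divdiff_primitive \<alpha> \<rho> (w, u)) has_field_derivative
      integral {0..1} (\<lambda>t. \<alpha> (\<gamma> t, u) / (\<gamma> t - w))) (at w)"
    by (simp add: o_def has_field_derivative_def)
  moreover have "holo_at \<alpha> (\<zeta>, u)" if "\<zeta> \<in> ball 0 R" for \<zeta>
    using holo_\<alpha> \<delta> x that by auto
  then have "(\<lambda>\<zeta>. \<alpha> (\<zeta>, u)) holomorphic_on ball 0 R"
    unfolding holomorphic_on_def field_differentiable_def
    using holo_at_has_field_derivative_fst has_field_derivative_at_within by blast
  then have "integral {0..1} (\<lambda>t. \<alpha> (\<gamma> t, u) / (\<gamma> t - w)) = (\<alpha> (w, u) - \<alpha> (0, u)) / w"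
    using has_integral_circlepath_divided_difference[of "\<lambda>\<zeta>. \<alpha> (\<zeta>, u)"] \<rho> x assms(2)
    by (intro integral_unique) auto
  ultimately show ?thesis by simp
qed

lemma divdiff_primitive_zero_param:
  "(\<And>z. z \<in> ball 0 R \<Longrightarrow> \<alpha> (z, 0) = 0) \<Longrightarrow> divdiff_primitive \<alpha> \<rho> (w, 0) = 0"
  unfolding divdiff_primitive_def using \<rho> by simp

lemma continuous_on_divdiff_primitive: "continuous_on D (divdiff_primitive \<alpha> \<rho>)"
  using holo_at_divdiff_primitive by (rule holo_at_imp_continuous_on)

lemma holo_at_omega_primitive: "x \<in> D \<Longrightarrow> holo_at (omega_primitive \<alpha> \<rho> k) x"
  unfolding omega_primitive_def[abs_def]
  by (intro holo_at_add holo_at_divide_const holo_at_power holo_at_fst holo_at_ident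
      holo_at_divdiff_primitive)

lemma has_field_derivative_omega_primitive:
  assumes "(w, u) \<in> D" and "w \<noteq> 0"
  shows "((\<lambda>w. omega_primitive \<alpha> \<rho> k (w, u)) has_field_derivative
      w ^ k + (\<alpha> (w, u) - \<alpha> (0, u)) / w) (at w)"
proof -
  have "((\<lambda>w. w ^ (k + 1) / of_nat (k + 1) + divdiff_primitive \<alpha> \<rho> (w, u)) has_field_derivative
      (of_nat (k + 1) * w ^ k / of_nat (k + 1) + (\<alpha> (w, u) - \<alpha> (0, u)) / w)) (at w)"
    by (intro DERIV_add DERIV_cdivide has_field_derivative_divdiff_primitive assms)
      (use DERIV_power[OF DERIV_ident, where n="k + 1"] in simp)
  moreover have "of_nat (k + 1) * w ^ k / of_nat (k + 1) = w ^ k"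
    by (simp del: of_nat_Suc)
  ultimately show ?thesis unfolding omega_primitive_def by simp
qed

lemma holo_at_\<alpha>_0: "u \<in> ball 0 \<delta> \<Longrightarrow> holo_at (\<lambda>u. \<alpha> (0, u)) u"
proof -
  assume "u \<in> ball 0 \<delta>"
  then have "holo_at \<alpha> (0, u)" using holo_\<alpha> \<delta> \<rho> by auto
  then show ?thesis by (rule holo_at_compose[OF holo_at_Pair[OF holo_at_const holo_at_ident]])
qed

lemma holo_at_normalizing_constant:
  assumes u: "u \<in> ball 0 \<delta>" and \<sigma>: "holo_at \<sigma> u" "norm (\<sigma> u) < \<rho>"
    and close: "norm (\<sigma> u / (\<theta> * p) - 1) < 1"
  shows "holo_at (normalizing_constant \<alpha> \<rho> k \<sigma> \<theta> p) u"
proof -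
  have "holo_at (\<lambda>u. omega_primitive \<alpha> \<rho> k (\<sigma> u, u)) u"
    using holo_at_omega_primitive \<sigma>(2) u
    by (intro holo_at_compose[OF holo_at_Pair[OF \<sigma>(1) holo_at_ident]]) auto
  moreover have "\<sigma> u / (\<theta> * p) \<notin> \<real>\<^sub>\<le>\<^sub>0"
    using one_minus_notin_nonpos_Reals[of "1 - \<sigma> u / (\<theta> * p)"] close
    by (simp add: norm_minus_commute)
  ultimately show ?thesis
    unfolding normalizing_constant_def[abs_def]
    by (intro holo_at_add holo_at_diff holo_at_mult holo_at_const holo_at_\<alpha>_0[OF u] holo_at_Ln
        holo_at_divide_const \<sigma>(1))
qed

lemma normalizing_constant_0_param:
  assumes "\<And>z. z \<in> ball 0 R \<Longrightarrow> \<alpha> (z, 0) = 0" "\<sigma> 0 = \<theta> * p" "\<theta> ^ (k + 1) = 1"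
  shows "normalizing_constant \<alpha> \<rho> k \<sigma> \<theta> p 0 = 0"
proof -
  have "(\<theta> * p) ^ (k + 1) = p ^ (k + 1)" by (metis assms(3) mult_1 power_mult_distrib)
  then have "omega_primitive \<alpha> \<rho> k (\<sigma> 0, 0) = p ^ (k + 1) / of_nat (k + 1)"
    unfolding omega_primitive_def assms(2) using divdiff_primitive_zero_param[OF assms(1)] by simp
  then show ?thesis
    unfolding normalizing_constant_def using assms(1) \<rho> by simp
qed

end

lemma holo_at_inv_into_graph:
  fixes F :: "'a::{complex_normed_vector,euclidean_space} \<times> complex \<Rightarrow> complex"
  assumes S: "open S" and holo: "\<And>x. x \<in> S \<Longrightarrow> holo_at F x"
    and inj: "inj_on (\<lambda>x. (fst x, F x)) S" and x0: "(a, t0) \<in> S"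
    and F': "((\<lambda>t. F (a, t)) has_field_derivative F') (at t0)" "F' \<noteq> 0"
  shows "holo_at (inv_into S (\<lambda>x. (fst x, F x))) (a, F (a, t0))"
proof -
  define L where "L = cderiv F (a, t0)"
  have dL: "(F has_derivative L) (at (a, t0))" and cL: "complex_linear L" and bL: "bounded_linear L"
    using holo_at_cderiv[OF holo[OF x0]] unfolding L_def by auto
  have "((\<lambda>t. F (a, t)) has_field_derivative L (0, 1)) (at t0)"
    using has_field_derivative_along_line[of F "(a, 0)" t0 "(0, 1)"] holo[OF x0]
    by (simp add: L_def)
  then have "L (0, 1) = F'"
    using F'(1) DERIV_unique by blast
  then have L_split: "L (b, t) = L (b, 0) + F' * t" for b t
    using linear_add[OF bounded_linear.linear[OF bL], of "(b, 0)" "(0, t)"]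
      complex_linear_mult_left[OF cL, of t "(0, 1)"]
    by (simp add: mult.commute)
  define G where "G x = (fst x, F x)" for x
  define g' where "g' y = (fst y, (snd y - L (fst y, 0)) / F')" for y :: "'a \<times> complex"
  have "continuous_on S G"
    unfolding G_def using holo_at_imp_continuous_on[OF holo] by (intro continuous_intros)
  moreover have "inv_into S G (G x) = x" if "x \<in> S" for x
    using inj that unfolding G_def[abs_def] by (rule inv_into_f_f)
  moreover have "(G has_derivative (\<lambda>y. (fst y, L y))) (at (a, t0))"
    unfolding G_def by (intro has_derivative_Pair has_derivative_fst has_derivative_ident dL)
  moreover have "(\<lambda>y. (fst y, L y)) \<circ> g' = id"
    using F'(2) by (auto simp: g'_def L_split[of _ "(_ - _) / F'"])
  ultimately have "(inv_into S G has_derivative g') (at (G (a, t0)))"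
    by (rule has_derivative_inverse_strong[OF S x0])
  moreover have "complex_linear g'"
    using complex_linear_mult_left[OF cL, of _ "(_, 0)"]
    by (auto simp: complex_linear_def g'_def scaleC_prod_def algebra_simps)
  ultimately show ?thesis
    unfolding holo_at_def G_def[abs_def] by auto
qed

lemma holo_at_implicit_function:
  fixes F :: "'a::{complex_normed_vector,euclidean_space} \<times> complex \<Rightarrow> complex"
  assumes S: "open S" and holo: "\<And>x. x \<in> S \<Longrightarrow> holo_at F x"
    and inj: "inj_on (\<lambda>x. (fst x, F x)) S"
    and V: "open V" "a \<in> V"
    and h: "\<And>b. b \<in> V \<Longrightarrow> (b, h b) \<in> S" "\<And>b. b \<in> V \<Longrightarrow> F (b, h b) = 0"
    and F': "((\<lambda>t. F (a, t)) has_field_derivative F') (at (h a))" "F' \<noteq> 0"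
  shows "holo_at h a"
proof (rule holo_at_transform_open[OF _ V])
  let ?g = "inv_into S (\<lambda>x. (fst x, F x))"
  have "holo_at ?g (a, 0)"
    using holo_at_inv_into_graph[OF S holo inj h(1)[OF V(2)] F'] h(2)[OF V(2)] by simp
  then show "holo_at (\<lambda>b. snd (?g (b, 0))) a"
    by (intro holo_at_snd holo_at_compose[OF holo_at_Pair[OF holo_at_ident holo_at_const]])
  show "h b = snd (?g (b, 0))" if "b \<in> V" for b
    using inv_into_f_f[OF inj h(1)[OF that]] h(2)[OF that] by simp
qed

text \<open>The bounds involving \<open>\<delta>1\<close> make \<open>contraction z u\<close> below a \<open>1/2\<close>-contraction of the disc
  \<open>|h| \<le> r\<close> into itself, for \<open>z\<close> in the annulus and \<open>|u| < \<delta>1\<close>.\<close>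
locale annulus_setup = holomorphic_family \<alpha> R \<rho> \<delta> U
  for \<alpha> :: "complex \<times> (complex ^ 'n::finite) \<Rightarrow> complex" and R \<rho> \<delta> U +
  fixes k :: nat and R1 R2 :: real and \<sigma> :: "complex ^ 'n \<Rightarrow> complex" and \<theta> p :: complex
    and r \<delta>1 :: real
  assumes radii: "0 < R1" "R1 < R2" "R2 < \<rho>"
    and \<alpha>_zero_param: "\<And>z. z \<in> ball 0 R \<Longrightarrow> \<alpha> (z, 0) = 0"
    and p: "R1 < norm p" "norm p < R2"
    and holo_\<sigma>: "\<And>u. u \<in> U \<Longrightarrow> holo_at \<sigma> u"
    and \<sigma>_0: "\<sigma> 0 = \<theta> * p"
    and \<theta>: "\<theta> ^ (k + 1) = 1" "norm \<theta> = 1"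
    and r: "0 < r" "r \<le> 1/4" "R2 * (1 + r) < \<rho>"
      "\<And>h::complex. norm h \<le> r \<Longrightarrow> norm ((1 + h) ^ k - 1) \<le> 1/4"
    and \<delta>1: "0 < \<delta>1" "\<delta>1 \<le> \<delta>"
    and small_\<alpha>: "\<And>w u. norm w \<le> R2 * (1 + r) \<Longrightarrow> norm u < \<delta>1 \<Longrightarrow>
      norm (\<alpha> (w, u)) \<le> R1 ^ (k + 1) / 32"
    and small_divdiff_primitive: "\<And>w u. norm w \<le> R2 * (1 + r) \<Longrightarrow> norm u < \<delta>1 \<Longrightarrow>
      norm (divdiff_primitive \<alpha> \<rho> (w, u)) \<le> r * R1 ^ (k + 1) / 8"
    and small_normalizing_constant: "\<And>u. norm u < \<delta>1 \<Longrightarrow>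
      norm (normalizing_constant \<alpha> \<rho> k \<sigma> \<theta> p u) \<le> r * R1 ^ (k + 1) / 8"
    and \<sigma>_close: "\<And>u. norm u < \<delta>1 \<Longrightarrow> norm (\<sigma> u / (\<theta> * p) - 1) \<le> r"
begin

definition annulus :: "complex set" where
  "annulus = {z. R1 < norm z \<and> norm z < R2}"

definition U0 :: "(complex ^ 'n) set" where
  "U0 = ball 0 \<delta>1"

abbreviation c :: "complex ^ 'n \<Rightarrow> complex" where
  "c \<equiv> normalizing_constant \<alpha> \<rho> k \<sigma> \<theta> p"

text \<open>The equation for \<open>h\<close> in the ansatz \<open>\<phi>\<^sub>u(z) = \<theta>z(1 + h)\<close>: integrating the pullback
  identity in \<open>z\<close> and normalising the integration constant at \<open>z = p\<close> gives \<open>defect z u h = 0\<close>.\<close>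
definition defect :: "complex \<Rightarrow> complex ^ 'n \<Rightarrow> complex \<Rightarrow> complex" where
  "defect z u h = omega_primitive \<alpha> \<rho> k (\<theta> * z * (1 + h), u) - z ^ (k + 1) / of_nat (k + 1)
     + \<alpha> (0, u) * Ln (1 + h) - c u"

definition defect_deriv :: "complex \<Rightarrow> complex ^ 'n \<Rightarrow> complex \<Rightarrow> complex" where
  "defect_deriv z u h = z ^ (k + 1) * (1 + h) ^ k + \<alpha> (\<theta> * z * (1 + h), u) / (1 + h)"

text \<open>A simplified Newton map: \<open>\<partial>\<^sub>h defect \<approx> z\<^sup>k\<^sup>+\<^sup>1\<close> for small \<open>h\<close> and \<open>u\<close>.\<close>
definition contraction :: "complex \<Rightarrow> complex ^ 'n \<Rightarrow> complex \<Rightarrow> complex" where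
  "contraction z u h = h - defect z u h / z ^ (k + 1)"

lemma annulusD: "z \<in> annulus \<Longrightarrow> z \<noteq> 0 \<and> R1 < norm z \<and> norm z < R2"
  using radii by (auto simp: annulus_def)

lemma open_annulus: "open annulus"
proof -
  have "annulus = norm -` {R1<..<R2}" by (auto simp: annulus_def)
  then show ?thesis by (metis continuous_on_norm_id open_greaterThanLessThan open_vimage)
qed

lemma U0_subset: "u \<in> U0 \<Longrightarrow> u \<in> ball 0 \<delta> \<and> u \<in> U"
  using \<delta>1 \<delta> by (auto simp: U0_def)

lemma norm_power_annulus:
  assumes "z \<in> annulus"
  shows "R1 ^ (k + 1) \<le> norm (z ^ (k + 1))" "z ^ (k + 1) \<noteq> 0" "0 < R1 ^ (k + 1)"
proof -
  show "R1 ^ (k + 1) \<le> norm (z ^ (k + 1))" unfolding norm_power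
    using annulusD[OF assms] radii by (intro power_mono) auto
qed (use annulusD[OF assms] radii in auto)

lemma norm_one_plus_small:
  assumes "norm (h::complex) \<le> r"
  shows "3/4 \<le> norm (1 + h)" "norm (1 + h) \<le> 1 + r" "1 + h \<noteq> 0" "1 + h \<notin> \<real>\<^sub>\<le>\<^sub>0"
proof -
  show "3/4 \<le> norm (1 + h)" using norm_triangle_ineq4[of "1 + h" h] assms r by simp
  then show "1 + h \<noteq> 0" by auto
  show "norm (1 + h) \<le> 1 + r" using norm_triangle_ineq[of 1 h] assms by simp
  show "1 + h \<notin> \<real>\<^sub>\<le>\<^sub>0" using one_minus_notin_nonpos_Reals[of "-h"] assms r by simp
qed

lemma norm_ansatz_bounds:
  assumes z: "z \<in> annulus" and h: "norm h \<le> r"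
  shows "norm (\<theta> * z * (1 + h)) \<le> R2 * (1 + r)" "\<theta> * z * (1 + h) \<noteq> 0"
proof -
  have nz: "norm (\<theta> * z * (1 + h)) = norm z * norm (1 + h)" using \<theta> by (simp add: norm_mult)
  show "norm (\<theta> * z * (1 + h)) \<le> R2 * (1 + r)" unfolding nz
    using annulusD[OF z] norm_one_plus_small[OF h] radii r by (intro mult_mono) auto
  show "\<theta> * z * (1 + h) \<noteq> 0"
    using annulusD[OF z] norm_one_plus_small[OF h] \<theta> by auto
qed

lemma ansatz_in_D: "z \<in> annulus \<Longrightarrow> norm h \<le> r \<Longrightarrow> u \<in> U0 \<Longrightarrow> (\<theta> * z * (1 + h), u) \<in> D"
  using norm_ansatz_bounds(1)[of z h] r \<delta>1 by (auto simp: U0_def)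

lemma has_field_derivative_defect:
  assumes z: "z \<in> annulus" and u: "u \<in> U0" and h: "norm h \<le> r"
  shows "((\<lambda>h. defect z u h) has_field_derivative defect_deriv z u h) (at h)"
proof -
  let ?w = "\<theta> * z * (1 + h)"
  have w0: "?w \<noteq> 0" using norm_ansatz_bounds(2)[OF z h] .
  have "((\<lambda>h. \<theta> * z * (1 + h)) has_field_derivative \<theta> * z) (at h)"
    by (auto intro!: derivative_eq_intros)
  from DERIV_chain2[OF has_field_derivative_omega_primitive[OF ansatz_in_D[OF z h u] w0] this]
  have "((\<lambda>h. omega_primitive \<alpha> \<rho> k (\<theta> * z * (1 + h), u)) has_field_derivative
      (?w ^ k + (\<alpha> (?w, u) - \<alpha> (0, u)) / ?w) * (\<theta> * z)) (at h)" .
  moreover have "((\<lambda>h. 1 + h) has_field_derivative 1) (at h)"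
    by (auto intro!: derivative_eq_intros)
  from DERIV_chain2[OF has_field_derivative_Ln[OF norm_one_plus_small(4)[OF h]] this]
  have "((\<lambda>h. Ln (1 + h)) has_field_derivative inverse (1 + h)) (at h)"
    by simp
  ultimately have "((\<lambda>h. defect z u h) has_field_derivative
      (?w ^ k + (\<alpha> (?w, u) - \<alpha> (0, u)) / ?w) * (\<theta> * z) + \<alpha> (0, u) * inverse (1 + h)) (at h)"
    unfolding defect_def using norm_one_plus_small(4)[OF h] by (auto intro!: derivative_eq_intros)
  moreover have "?w ^ k * (\<theta> * z) = \<theta> ^ (k + 1) * (z ^ (k + 1) * (1 + h) ^ k)"
    by (simp only: power_mult_distrib power_Suc Suc_eq_plus1[symmetric]) (simp add: algebra_simps)
  then have "?w ^ k * (\<theta> * z) = z ^ (k + 1) * (1 + h) ^ k"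
    by (metis \<theta>(1) mult_1)
  moreover have "(A1 - A0) / (t * q) * t + A0 * inverse q = A1 / q" if "t \<noteq> 0" "q \<noteq> 0"
    for A0 A1 t q :: complex
    using that by (simp add: field_simps)
  then have "(\<alpha> (?w, u) - \<alpha> (0, u)) / ?w * (\<theta> * z) + \<alpha> (0, u) * inverse (1 + h) = \<alpha> (?w, u) / (1 + h)"
    using w0 norm_one_plus_small(3)[OF h] by simp
  ultimately show ?thesis
    by (simp add: defect_deriv_def distrib_right add.assoc)
qed

lemma defect_deriv_close:
  assumes z: "z \<in> annulus" and u: "u \<in> U0" and h: "norm h \<le> r"
  shows "norm (1 - defect_deriv z u h / z ^ (k + 1)) \<le> 1/2"
proof -
  define X where "X = \<alpha> (\<theta> * z * (1 + h), u) / ((1 + h) * z ^ (k + 1))"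
  have zk: "z ^ (k + 1) \<noteq> 0" "0 < R1 ^ (k + 1)" using norm_power_annulus[OF z] by auto
  have "1 - (Z * q ^ k + a / q) / Z = - (q ^ k - 1) - a / (q * Z)" if "q \<noteq> 0" "Z \<noteq> 0"
    for q Z a :: complex
    using that by (simp add: field_simps)
  then have eq: "1 - defect_deriv z u h / z ^ (k + 1) = - ((1 + h) ^ k - 1) - X"
    using zk norm_one_plus_small(3)[OF h] unfolding defect_deriv_def X_def by (simp add: mult.commute)
  have "norm X \<le> (R1 ^ (k + 1) / 32) / (3/4 * R1 ^ (k + 1))"
    unfolding X_def norm_divide norm_mult
    using small_\<alpha> norm_ansatz_bounds(1)[OF z h] u norm_one_plus_small(1)[OF h] norm_power_annulus[OF z]
    by (intro frac_le mult_mono) (auto simp: U0_def)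
  also have "\<dots> = 1/24"
    using zk radii by simp
  finally have "norm X \<le> 1/24" .
  moreover have "norm (1 - defect_deriv z u h / z ^ (k + 1)) \<le> norm ((1 + h) ^ k - 1) + norm X"
    unfolding eq using norm_triangle_ineq4[of "- ((1 + h) ^ k - 1)" X] by (simp only: norm_minus_cancel)
  ultimately show ?thesis
    using r(4)[OF h] by linarith
qed

lemma contraction_lipschitz:
  assumes z: "z \<in> annulus" and u: "u \<in> U0" and h: "norm h1 \<le> r" "norm h2 \<le> r"
  shows "norm (contraction z u h1 - contraction z u h2) \<le> 1/2 * norm (h1 - h2)"
proof (rule field_differentiable_bound[where S="cball 0 r"])
  show "((\<lambda>h. contraction z u h) has_field_derivative (1 - defect_deriv z u h / z ^ (k + 1)))
      (at h within cball 0 r)" if "h \<in> cball 0 r" for h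
    unfolding contraction_def using that
    by (intro has_field_derivative_at_within[OF DERIV_diff] DERIV_ident DERIV_cdivide
        has_field_derivative_defect z u) simp
  show "norm (1 - defect_deriv z u h / z ^ (k + 1)) \<le> 1/2" if "h \<in> cball 0 r" for h
    using defect_deriv_close[OF z u] that by simp
qed (use h in auto)

lemma defect_0: "z \<in> annulus \<Longrightarrow> defect z u 0 = divdiff_primitive \<alpha> \<rho> (\<theta> * z, u) - c u"
  using \<theta>(1) by (simp add: defect_def omega_primitive_def power_mult_distrib)

lemma norm_contraction_0:
  assumes z: "z \<in> annulus" and u: "u \<in> U0"
  shows "norm (contraction z u 0) \<le> r / 4"
proof -
  have "norm (\<theta> * z) \<le> R2 * (1 + r)"
    using norm_ansatz_bounds(1)[OF z, of 0] r by simp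
  then have "norm (defect z u 0) \<le> r * R1 ^ (k + 1) / 8 + r * R1 ^ (k + 1) / 8"
    unfolding defect_0[OF z]
    using small_divdiff_primitive small_normalizing_constant u norm_triangle_ineq4
    by (smt (verit) U0_def mem_ball_0)
  then have "norm (defect z u 0) \<le> r * R1 ^ (k + 1) / 4"
    by (simp add: mult_ac)
  then have "norm (defect z u 0) / norm (z ^ (k + 1)) \<le> (r * R1 ^ (k + 1) / 4) / R1 ^ (k + 1)"
    using norm_power_annulus[OF z] r by (intro frac_le) simp_all
  also have "\<dots> = r / 4"
    using norm_power_annulus(3)[OF z] radii by simp
  finally show ?thesis
    by (simp only: contraction_def diff_0 norm_minus_cancel norm_divide)
qed

lemma norm_contraction_le:
  assumes z: "z \<in> annulus" and u: "u \<in> U0" and h: "norm h \<le> r"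
  shows "norm (contraction z u h) \<le> 3/4 * r"
  using contraction_lipschitz[OF z u h, of 0] norm_contraction_0[OF z u] h r
    norm_triangle_ineq2[of "contraction z u h" "contraction z u 0"]
  by simp

lemma contraction_fixed_iff: "z \<in> annulus \<Longrightarrow> contraction z u h = h \<longleftrightarrow> defect z u h = 0"
  using norm_power_annulus(2) unfolding contraction_def by auto

lemma ex1_defect_root:
  assumes z: "z \<in> annulus" and u: "u \<in> U0"
  shows "\<exists>!h. h \<in> cball 0 r \<and> defect z u h = 0"
proof -
  have "\<exists>!h\<in>cball 0 r. contraction z u h = h"
  proof (rule Banach_fix[where c="1/2"])
    show "contraction z u ` cball 0 r \<subseteq> cball 0 r"
      using norm_contraction_le[OF z u] r(1) by fastforce
    show "dist (contraction z u x) (contraction z u y) \<le> 1/2 * dist x y"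
      if "x \<in> cball 0 r" "y \<in> cball 0 r" for x y
      using contraction_lipschitz[OF z u, of x y] that by (simp add: dist_norm)
  qed (use r in \<open>auto simp: complete_eq_closed\<close>)
  then show ?thesis using contraction_fixed_iff[OF z] by auto
qed

lemma defect_inj:
  assumes z: "z \<in> annulus" and u: "u \<in> U0" and h: "norm h1 \<le> r" "norm h2 \<le> r"
    and eq: "defect z u h1 = defect z u h2"
  shows "h1 = h2"
proof -
  have "contraction z u h1 - contraction z u h2 = h1 - h2" unfolding contraction_def eq by simp
  then show ?thesis using contraction_lipschitz[OF z u h] by simp
qed

definition h_sol :: "complex \<Rightarrow> complex ^ 'n \<Rightarrow> complex" where
  "h_sol z u = (THE h. h \<in> cball 0 r \<and> defect z u h = 0)"

lemma h_sol:
  assumes z: "z \<in> annulus" and u: "u \<in> U0"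
  shows "defect z u (h_sol z u) = 0" "norm (h_sol z u) \<le> 3/4 * r"
    and h_sol_unique: "\<And>h. h \<in> cball 0 r \<Longrightarrow> defect z u h = 0 \<Longrightarrow> h_sol z u = h"
proof -
  have sol: "h_sol z u \<in> cball 0 r \<and> defect z u (h_sol z u) = 0"
    unfolding h_sol_def by (rule theI'[OF ex1_defect_root[OF z u]])
  then show "defect z u (h_sol z u) = 0" by blast
  show "\<And>h. h \<in> cball 0 r \<Longrightarrow> defect z u h = 0 \<Longrightarrow> h_sol z u = h"
    using ex1_defect_root[OF z u] sol by blast
  have "contraction z u (h_sol z u) = h_sol z u"
    using sol contraction_fixed_iff[OF z] by blast
  then show "norm (h_sol z u) \<le> 3/4 * r"
    using sol norm_contraction_le[OF z u, of "h_sol z u"] by simp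
qed

lemma norm_h_sol_le: "z \<in> annulus \<Longrightarrow> u \<in> U0 \<Longrightarrow> norm (h_sol z u) \<le> r"
  using h_sol(2)[of z u] r by simp

lemma \<sigma>_as_ansatz:
  assumes u: "u \<in> U0"
  shows "norm (\<sigma> u / (\<theta> * p) - 1) \<le> r" "\<sigma> u = \<theta> * p * (1 + (\<sigma> u / (\<theta> * p) - 1))"
    "norm (\<sigma> u) < \<rho>"
proof -
  show close: "norm (\<sigma> u / (\<theta> * p) - 1) \<le> r" using \<sigma>_close u by (simp add: U0_def)
  have "\<theta> * p \<noteq> 0" using \<theta> p radii by auto
  then show eq: "\<sigma> u = \<theta> * p * (1 + (\<sigma> u / (\<theta> * p) - 1))" by simp
  have "norm (\<sigma> u) = norm p * norm (1 + (\<sigma> u / (\<theta> * p) - 1))"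
    by (subst eq) (simp only: norm_mult \<theta>(2) mult_1)
  also have "\<dots> \<le> R2 * (1 + r)"
    using norm_one_plus_small(2)[OF close] p radii by (intro mult_mono) auto
  finally show "norm (\<sigma> u) < \<rho>" using r by simp
qed

lemma holo_at_defect:
  assumes "x \<in> (annulus \<times> U0) \<times> ball 0 r"
  shows "holo_at (\<lambda>x. defect (fst (fst x)) (snd (fst x)) (snd x)) x"
proof -
  obtain z u h where x: "x = ((z, u), h)" and z: "z \<in> annulus" and u: "u \<in> U0" and h: "norm h \<le> r"
    using assms by auto
  have hz: "holo_at (\<lambda>x. fst (fst x)) x" and hu: "holo_at (\<lambda>x. snd (fst x)) x"
    and hh: "holo_at (\<lambda>x. snd x) x"
    by (intro holo_at_fst holo_at_snd holo_at_ident)+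
  have "holo_at (\<lambda>x. (\<theta> * fst (fst x) * (1 + snd x), snd (fst x))) x"
    by (intro holo_at_Pair holo_at_mult holo_at_add holo_at_const hz hu hh)
  moreover have "holo_at (omega_primitive \<alpha> \<rho> k) (\<theta> * fst (fst x) * (1 + snd x), snd (fst x))"
    using holo_at_omega_primitive ansatz_in_D[OF z h u] x by simp
  ultimately have hQ: "holo_at (\<lambda>x. omega_primitive \<alpha> \<rho> k (\<theta> * fst (fst x) * (1 + snd x), snd (fst x))) x"
    by (rule holo_at_compose)
  have "holo_at (\<lambda>u. \<alpha> (0, u)) (snd (fst x))" "holo_at c (snd (fst x))"
    using holo_at_\<alpha>_0 holo_at_normalizing_constant[of u \<sigma>] U0_subset[OF u] holo_\<sigma> \<sigma>_as_ansatz[OF u] r x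
    by auto
  then have "holo_at (\<lambda>x. \<alpha> (0, snd (fst x))) x" "holo_at (\<lambda>x. c (snd (fst x))) x"
    by (auto intro: holo_at_compose[OF hu])
  moreover have "holo_at (\<lambda>x. Ln (1 + snd x)) x"
    using norm_one_plus_small(4)[OF h] x by (intro holo_at_Ln holo_at_add holo_at_const hh) auto
  ultimately show ?thesis
    unfolding defect_def
    by (intro holo_at_diff holo_at_add holo_at_mult holo_at_divide_const holo_at_power hz hQ)
qed

lemma holo_at_h_sol:
  assumes "x \<in> annulus \<times> U0"
  shows "holo_at (\<lambda>x. h_sol (fst x) (snd x)) x"
proof -
  let ?S = "(annulus \<times> U0) \<times> ball 0 r"
  let ?F = "\<lambda>x. defect (fst (fst x)) (snd (fst x)) (snd x)"
  obtain z u where x: "x = (z, u)" and z: "z \<in> annulus" and u: "u \<in> U0"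
    using assms by auto
  have "open ?S" "open (annulus \<times> U0)"
    by (simp_all add: open_Times open_annulus U0_def)
  moreover have "inj_on (\<lambda>x. (fst x, ?F x)) ?S"
  proof (rule inj_onI)
    fix y y' assume y: "y \<in> ?S" and y': "y' \<in> ?S" and eq: "(fst y, ?F y) = (fst y', ?F y')"
    then have "snd y = snd y'"
      using defect_inj[of "fst (fst y)" "snd (fst y)" "snd y" "snd y'"] by (auto simp: mem_Times_iff)
    with eq show "y = y'" by (simp add: prod_eq_iff)
  qed
  moreover have "(b, h_sol (fst b) (snd b)) \<in> ?S" "?F (b, h_sol (fst b) (snd b)) = 0"
    if "b \<in> annulus \<times> U0" for b
    using that h_sol[of "fst b" "snd b"] r by auto
  moreover have "((\<lambda>t. ?F (x, t)) has_field_derivative defect_deriv z u (h_sol z u)) (at (h_sol z u))"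
    using has_field_derivative_defect[OF z u norm_h_sol_le[OF z u]] x by simp
  moreover have "defect_deriv z u (h_sol z u) \<noteq> 0"
    using defect_deriv_close[OF z u norm_h_sol_le[OF z u]] by auto
  ultimately show ?thesis
    using holo_at_implicit_function[of ?S ?F "annulus \<times> U0" x "\<lambda>x. h_sol (fst x) (snd x)"]
      holo_at_defect assms x by simp
qed

definition phi :: "complex \<times> (complex ^ 'n) \<Rightarrow> complex" where
  "phi x = \<theta> * fst x * (1 + h_sol (fst x) (snd x))"

lemma holo_at_phi: "x \<in> annulus \<times> U0 \<Longrightarrow> holo_at phi x"
  unfolding phi_def[abs_def]
  by (intro holo_at_mult holo_at_add holo_at_const holo_at_fst holo_at_ident holo_at_h_sol)

lemma phi_in_ball:
  assumes "z \<in> annulus" "u \<in> U0"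
  shows "phi (z, u) \<in> ball 0 R" "phi (z, u) \<noteq> 0"
  using norm_ansatz_bounds[OF assms(1) norm_h_sol_le[OF assms]] r \<rho> by (auto simp: phi_def)

lemma phi_0: "z \<in> annulus \<Longrightarrow> phi (z, 0) = \<theta> * z"
proof -
  assume z: "z \<in> annulus"
  have "0 \<in> U0" using \<delta>1 by (simp add: U0_def)
  moreover have "defect z 0 0 = 0"
    using defect_0[OF z] divdiff_primitive_zero_param[OF \<alpha>_zero_param]
      normalizing_constant_0_param[where \<sigma>=\<sigma> and \<theta>=\<theta> and p=p and k=k, OF \<alpha>_zero_param \<sigma>_0 \<theta>(1)]
    by simp
  ultimately have "h_sol z 0 = 0"
    using h_sol_unique[OF z] r by simp
  then show ?thesis by (simp add: phi_def)
qed

lemma phi_p: "u \<in> U0 \<Longrightarrow> phi (p, u) = \<sigma> u"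
proof -
  assume u: "u \<in> U0"
  have p_annulus: "p \<in> annulus" using p by (simp add: annulus_def)
  have "defect p u (\<sigma> u / (\<theta> * p) - 1) = 0"
    unfolding defect_def normalizing_constant_def using \<sigma>_as_ansatz(2)[OF u, symmetric] by simp
  then have "h_sol p u = \<sigma> u / (\<theta> * p) - 1"
    using h_sol_unique[OF p_annulus u] \<sigma>_as_ansatz(1)[OF u] by simp
  then show ?thesis
    using \<sigma>_as_ansatz(2)[OF u] by (simp add: phi_def)
qed

lemma derivative_defect_h_sol:
  assumes z: "z \<in> annulus" and u: "u \<in> U0"
    and dH: "((\<lambda>w. h_sol w u) has_field_derivative hz) (at z)"
  defines "w \<equiv> phi (z, u)" and "h0 \<equiv> h_sol z u"
  shows "(w ^ k + (\<alpha> (w, u) - \<alpha> (0, u)) / w) * (\<theta> * (1 + h0) + \<theta> * z * hz) - z ^ k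
    + \<alpha> (0, u) * (inverse (1 + h0) * hz) = 0"
proof -
  have h0: "norm h0 \<le> r" using norm_h_sol_le[OF z u] by (simp add: h0_def)
  have w: "w = \<theta> * z * (1 + h0)" "w \<noteq> 0"
    using phi_in_ball(2)[OF z u] by (simp_all add: w_def h0_def phi_def)
  have d\<phi>: "((\<lambda>z. \<theta> * z * (1 + h_sol z u)) has_field_derivative \<theta> * (1 + h0) + \<theta> * z * hz) (at z)"
    unfolding h0_def by (auto intro!: derivative_eq_intros dH simp: algebra_simps)
  have "((\<lambda>w. omega_primitive \<alpha> \<rho> k (w, u)) has_field_derivative w ^ k + (\<alpha> (w, u) - \<alpha> (0, u)) / w)
      (at (\<theta> * z * (1 + h_sol z u)))"
    using has_field_derivative_omega_primitive[OF ansatz_in_D[OF z h0 u] w(2)[unfolded w(1)]] w(1)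
    by (simp add: h0_def)
  note dQ = DERIV_chain2[OF this d\<phi>]
  have "((\<lambda>z. 1 + h_sol z u) has_field_derivative hz) (at z)"
    using DERIV_add[OF DERIV_const dH] by simp
  note dL = DERIV_chain2[OF has_field_derivative_Ln[OF norm_one_plus_small(4)[OF norm_h_sol_le[OF z u]]] this]
  have "((\<lambda>z. z ^ (k + 1) / of_nat (k + 1)) has_field_derivative of_nat (k + 1) * z ^ k / of_nat (k + 1)) (at z)"
    using DERIV_power[OF DERIV_ident, where n="k + 1"] by (intro DERIV_cdivide) simp
  then have dz: "((\<lambda>z. z ^ (k + 1) / of_nat (k + 1)) has_field_derivative z ^ k) (at z)"
    by (simp del: of_nat_Suc)
  have "((\<lambda>z. defect z u (h_sol z u)) has_field_derivative
      (w ^ k + (\<alpha> (w, u) - \<alpha> (0, u)) / w) * (\<theta> * (1 + h0) + \<theta> * z * hz) - z ^ k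
      + \<alpha> (0, u) * (inverse (1 + h0) * hz) - 0) (at z)"
    unfolding defect_def using dQ dL h0_def
    by (intro DERIV_diff DERIV_add DERIV_cmult dz DERIV_const) auto
  moreover have "((\<lambda>z. defect z u (h_sol z u)) has_field_derivative 0) (at z)"
    using h_sol(1) u by (intro has_field_derivative_transform_within_open[OF DERIV_const open_annulus z])
      auto
  ultimately show ?thesis
    using DERIV_unique by fastforce
qed

lemma phi_pullback:
  assumes z: "z \<in> annulus" and u: "u \<in> U0"
  shows "(phi (z, u) ^ k + \<alpha> (phi (z, u), u) / phi (z, u)) * deriv (\<lambda>w. phi (w, u)) z
    = z ^ k + \<alpha> (0, u) / z"
proof -
  define h0 where "h0 = h_sol z u"
  define w where "w = phi (z, u)"
  have w: "w = \<theta> * z * (1 + h0)" "w \<noteq> 0"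
    using phi_in_ball(2)[OF z u] by (simp_all add: w_def h0_def phi_def)
  obtain hz where dH: "((\<lambda>w. h_sol w u) has_field_derivative hz) (at z)"
    using holo_at_has_field_derivative_fst[OF holo_at_h_sol] z u by fastforce
  define pz where "pz = \<theta> * (1 + h0) + \<theta> * z * hz"
  have "((\<lambda>z. \<theta> * z * (1 + h_sol z u)) has_field_derivative pz) (at z)"
    unfolding pz_def h0_def by (auto intro!: derivative_eq_intros dH simp: algebra_simps)
  then have deriv: "deriv (\<lambda>w. phi (w, u)) z = pz"
    using DERIV_imp_deriv by (simp add: phi_def)
  have alg: "a * (t * q + t * z * hz) / (t * z * q) = a / z + a * (inverse q * hz)"
    if "t \<noteq> 0" "q \<noteq> 0" for a t q
    using that annulusD[OF z] by (simp add: field_simps)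
  have res: "\<alpha> (0, u) * pz / w = \<alpha> (0, u) / z + \<alpha> (0, u) * (inverse (1 + h0) * hz)"
    unfolding pz_def w(1) by (rule alg)
      (use \<theta>(2) norm_one_plus_small(3)[OF norm_h_sol_le[OF z u]] in \<open>auto simp: h0_def\<close>)
  have "(w ^ k + \<alpha> (w, u) / w) * pz = (w ^ k + (\<alpha> (w, u) - \<alpha> (0, u)) / w) * pz + \<alpha> (0, u) * pz / w"
    using w(2) by (simp add: field_simps)
  also have "\<dots> = (w ^ k + (\<alpha> (w, u) - \<alpha> (0, u)) / w) * pz - z ^ k
      + \<alpha> (0, u) * (inverse (1 + h0) * hz) + (z ^ k + \<alpha> (0, u) / z)"
    unfolding res by (simp add: algebra_simps)
  also have "\<dots> = z ^ k + \<alpha> (0, u) / z"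
    using derivative_defect_h_sol[OF z u dH] by (simp add: w_def h0_def pz_def)
  finally show ?thesis
    by (simp add: deriv w_def)
qed

lemma annulus_solution:
  "open U0 \<and> 0 \<in> U0 \<and> U0 \<subseteq> U \<and> holo_prod phi (annulus \<times> U0) \<and>
   (\<forall>z\<in>annulus. \<forall>u\<in>U0. phi (z, u) \<in> ball 0 R) \<and>
   (\<forall>u\<in>U0. \<forall>z\<in>annulus. phi (z, u) \<noteq> 0 \<and>
      (phi (z, u) ^ k + \<alpha> (phi (z, u), u) / phi (z, u)) * deriv (\<lambda>w. phi (w, u)) z
        = z ^ k + \<alpha> (0, u) / z) \<and>
   (\<forall>z\<in>annulus. phi (z, 0) = \<theta> * z) \<and>
   (\<forall>u\<in>U0. phi (p, u) = \<sigma> u)"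
  using \<delta>1 U0_subset holo_at_phi phi_in_ball phi_pullback phi_0 phi_p
  by (auto simp: U0_def holo_prod_iff_holo_at)

end

lemma eventually_uniformly_close_compact:
  fixes f :: "'a::metric_space \<times> 'b::heine_borel \<Rightarrow> 'c::metric_space"
  assumes K: "compact K" and f: "continuous_on (K \<times> ball u0 d) f" and "0 < d" "0 < e"
  shows "\<forall>\<^sub>F u in nhds u0. \<forall>w\<in>K. dist (f (w, u)) (f (w, u0)) < e"
proof -
  have "K \<times> cball u0 (d / 2) \<subseteq> K \<times> ball u0 d" using \<open>0 < d\<close> by auto
  with f have "uniformly_continuous_on (K \<times> cball u0 (d / 2)) f"
    by (intro compact_uniformly_continuous compact_Times K compact_cball) (rule continuous_on_subset)
  then obtain d' where d': "0 < d'" "\<And>a b. a \<in> K \<times> cball u0 (d / 2) \<Longrightarrow> b \<in> K \<times> cball u0 (d / 2) \<Longrightarrow>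
      dist a b < d' \<Longrightarrow> dist (f a) (f b) < e"
    unfolding uniformly_continuous_on_def using \<open>0 < e\<close> by metis
  show ?thesis
    unfolding eventually_nhds_metric
  proof (intro exI[of _ "min d' (d / 2)"] conjI allI impI ballI)
    fix u w assume "dist u u0 < min d' (d / 2)" "w \<in> K"
    then show "dist (f (w, u)) (f (w, u0)) < e"
      using \<open>0 < d\<close> by (intro d'(2)) (auto simp: dist_prod_def dist_commute)
  qed (use d' \<open>0 < d\<close> in auto)
qed

lemma eventually_nhds_dist_less:
  fixes f :: "'a::metric_space \<Rightarrow> 'b::metric_space"
  shows "continuous (at x) f \<Longrightarrow> 0 < e \<Longrightarrow> \<forall>\<^sub>F y in nhds x. dist (f y) (f x) < e"
  unfolding continuous_at_eps_delta eventually_nhds_metric by blast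

lemma root_of_unity_exp:
  fixes k :: nat and j :: int
  defines "\<theta> \<equiv> exp (2 * pi * \<i> * of_int j / of_nat (k + 1))"
  shows "\<theta> ^ (k + 1) = 1" "norm \<theta> = 1"
proof -
  have "\<theta> ^ (k + 1) = exp (of_nat (k + 1) * (2 * pi * \<i> * of_int j / of_nat (k + 1)))"
    unfolding \<theta>_def by (rule exp_of_nat_mult[symmetric])
  also have "\<dots> = exp ((2 * of_int j * pi) * \<i>)"
    by (simp del: of_nat_Suc add: field_simps)
  also have "\<dots> = 1" by (rule exp_integer_2pi) simp
  finally show "\<theta> ^ (k + 1) = 1" .
  show "norm \<theta> = 1" unfolding \<theta>_def by (simp add: norm_exp_eq_Re)
qed

lemma exists_contraction_radius:
  fixes k :: nat
  assumes "0 < R2" "R2 < \<rho>"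
  obtains r where "0 < r" "r \<le> 1/4" "R2 * (1 + r) < \<rho>"
    "\<And>h::complex. norm h \<le> r \<Longrightarrow> norm ((1 + h) ^ k - 1) \<le> 1/4"
proof -
  have "isCont (\<lambda>h::complex. (1 + h) ^ k) 0" by (intro continuous_intros)
  then obtain d where "0 < d" "\<And>h::complex. dist h 0 < d \<Longrightarrow> dist ((1 + h) ^ k) ((1 + 0) ^ k) < 1/4"
    unfolding continuous_at_eps_delta by (metis zero_less_divide_1_iff zero_less_numeral)
  then have d: "0 < d" "\<And>h::complex. norm h < d \<Longrightarrow> norm ((1 + h) ^ k - 1) < 1/4"
    by (auto simp: dist_norm)
  define r where "r = min (min (1/4) (d / 2)) ((\<rho> / R2 - 1) / 2)"
  have "0 < (\<rho> / R2 - 1) / 2" using assms by (simp add: field_simps)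
  then have r: "0 < r" "r \<le> 1/4" "r < d" "r \<le> (\<rho> / R2 - 1) / 2"
    using d(1) unfolding r_def by linarith+
  have "R2 * (1 + r) \<le> R2 * (1 + (\<rho> / R2 - 1) / 2)"
    using assms r by (intro mult_left_mono) auto
  also have "\<dots> < \<rho>" using assms by (simp add: field_simps)
  finally show ?thesis
    using r d(2) by (intro that) (auto intro: less_imp_le)
qed

lemma (in holomorphic_family) eventually_annulus_bounds:
  assumes r: "R2 * (1 + r) < \<rho>" and pos: "0 < \<epsilon>\<^sub>1" "0 < \<epsilon>\<^sub>2" "0 < \<epsilon>\<^sub>3" "0 < \<epsilon>\<^sub>4"
    and holo_\<sigma>: "\<And>u. u \<in> U \<Longrightarrow> holo_at \<sigma> u"
    and \<sigma>_0: "norm (\<sigma> 0) < \<rho>" "norm (\<sigma> 0 / (\<theta> * p) - 1) < 1"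
  shows "\<forall>\<^sub>F u in nhds 0.
    (\<forall>w\<in>cball 0 (R2 * (1 + r)). dist (\<alpha> (w, u)) (\<alpha> (w, 0)) < \<epsilon>\<^sub>1) \<and>
    (\<forall>w\<in>cball 0 (R2 * (1 + r)). dist (divdiff_primitive \<alpha> \<rho> (w, u)) (divdiff_primitive \<alpha> \<rho> (w, 0)) < \<epsilon>\<^sub>2) \<and>
    dist (normalizing_constant \<alpha> \<rho> k \<sigma> \<theta> p u) (normalizing_constant \<alpha> \<rho> k \<sigma> \<theta> p 0) < \<epsilon>\<^sub>3 \<and>
    dist (\<sigma> u) (\<sigma> 0) < \<epsilon>\<^sub>4"
proof -
  let ?K = "cball (0::complex) (R2 * (1 + r))"
  have K: "?K \<times> ball 0 \<delta> \<subseteq> D" "?K \<times> ball 0 \<delta> \<subseteq> ball 0 R \<times> U" using r \<rho> \<delta> by auto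
  have \<sigma>0: "holo_at \<sigma> 0" using holo_\<sigma> \<delta> by (simp add: subset_eq)
  have "\<forall>\<^sub>F u in nhds 0. \<forall>w\<in>?K. dist (\<alpha> (w, u)) (\<alpha> (w, 0)) < \<epsilon>\<^sub>1"
    using \<delta> pos K(2) continuous_on_subset[OF continuous_on_\<alpha>]
    by (intro eventually_uniformly_close_compact) auto
  moreover have "\<forall>\<^sub>F u in nhds 0. \<forall>w\<in>?K.
      dist (divdiff_primitive \<alpha> \<rho> (w, u)) (divdiff_primitive \<alpha> \<rho> (w, 0)) < \<epsilon>\<^sub>2"
    using \<delta> pos K(1) continuous_on_subset[OF continuous_on_divdiff_primitive]
    by (intro eventually_uniformly_close_compact) auto
  moreover have "holo_at (normalizing_constant \<alpha> \<rho> k \<sigma> \<theta> p) 0"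
    using \<delta>(1) \<sigma>0 \<sigma>_0 by (intro holo_at_normalizing_constant) auto
  then have "\<forall>\<^sub>F u in nhds 0.
      dist (normalizing_constant \<alpha> \<rho> k \<sigma> \<theta> p u) (normalizing_constant \<alpha> \<rho> k \<sigma> \<theta> p 0) < \<epsilon>\<^sub>3"
    using pos by (intro eventually_nhds_dist_less holo_at_imp_continuous)
  moreover have "\<forall>\<^sub>F u in nhds 0. dist (\<sigma> u) (\<sigma> 0) < \<epsilon>\<^sub>4"
    using pos by (intro eventually_nhds_dist_less holo_at_imp_continuous \<sigma>0)
  ultimately show ?thesis
    by eventually_elim blast
qed

lemma (in holomorphic_family) exists_annulus_setup:
  assumes radii: "0 < R1" "R1 < R2" "R2 < \<rho>"
    and \<alpha>_zero: "\<And>z. z \<in> ball 0 R \<Longrightarrow> \<alpha> (z, 0) = 0"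
    and p: "R1 < norm p" "norm p < R2"
    and holo_\<sigma>: "\<And>u. u \<in> U \<Longrightarrow> holo_at \<sigma> u" and \<sigma>_0: "\<sigma> 0 = \<theta> * p"
    and \<theta>: "\<theta> ^ (k + 1) = 1" "norm \<theta> = 1"
    and r: "0 < r" "r \<le> 1/4" "R2 * (1 + r) < \<rho>"
      "\<And>h::complex. norm h \<le> r \<Longrightarrow> norm ((1 + h) ^ k - 1) \<le> 1/4"
  obtains \<delta>1 where "annulus_setup \<alpha> R \<rho> \<delta> U k R1 R2 \<sigma> \<theta> p r \<delta>1"
proof -
  let ?c = "normalizing_constant \<alpha> \<rho> k \<sigma> \<theta> p"
  have \<theta>p: "\<theta> * p \<noteq> 0" "norm (\<theta> * p) < \<rho>" using \<theta> p radii by (auto simp: norm_mult)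
  have "0 < R1 ^ (k + 1) / 32" "0 < r * R1 ^ (k + 1) / 8" "0 < r * norm p"
    using radii r(1) p by (auto intro!: mult_pos_pos)
  from eventually_annulus_bounds[OF r(3) this(1,2,2,3) holo_\<sigma>, of \<theta> p k]
  obtain d where d: "0 < d" and small: "\<And>u. norm u < d \<Longrightarrow>
      (\<forall>w\<in>cball 0 (R2 * (1 + r)). dist (\<alpha> (w, u)) (\<alpha> (w, 0)) < R1 ^ (k + 1) / 32) \<and>
      (\<forall>w\<in>cball 0 (R2 * (1 + r)).
        dist (divdiff_primitive \<alpha> \<rho> (w, u)) (divdiff_primitive \<alpha> \<rho> (w, 0)) < r * R1 ^ (k + 1) / 8) \<and>
      dist (?c u) (?c 0) < r * R1 ^ (k + 1) / 8 \<and> dist (\<sigma> u) (\<sigma> 0) < r * norm p"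
    using \<theta>p \<sigma>_0 unfolding eventually_nhds_metric by (auto simp: dist_norm)
  show ?thesis
  proof (intro that[of "min d \<delta>"], unfold_locales)
    fix w :: complex and u :: "complex ^ 'n"
    assume w: "norm w \<le> R2 * (1 + r)" and u: "norm u < min d \<delta>"
    have "w \<in> cball 0 (R2 * (1 + r))" using w by simp
    with small[of u] u have "dist (\<alpha> (w, u)) (\<alpha> (w, 0)) < R1 ^ (k + 1) / 32"
      "dist (divdiff_primitive \<alpha> \<rho> (w, u)) (divdiff_primitive \<alpha> \<rho> (w, 0)) < r * R1 ^ (k + 1) / 8"
      by auto
    then show "norm (\<alpha> (w, u)) \<le> R1 ^ (k + 1) / 32"
      "norm (divdiff_primitive \<alpha> \<rho> (w, u)) \<le> r * R1 ^ (k + 1) / 8"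
      using \<alpha>_zero[of w] w r(3) \<rho> divdiff_primitive_zero_param[OF \<alpha>_zero] by (auto simp: dist_norm)
  next
    fix u :: "complex ^ 'n" assume u: "norm u < min d \<delta>"
    then show "norm (?c u) \<le> r * R1 ^ (k + 1) / 8"
      using small[of u]
        normalizing_constant_0_param[where \<sigma>=\<sigma> and \<theta>=\<theta> and p=p and k=k, OF \<alpha>_zero \<sigma>_0 \<theta>(1)]
      by (simp add: dist_norm)
    have "\<sigma> u / (\<theta> * p) - 1 = (\<sigma> u - \<theta> * p) / (\<theta> * p)"
      using \<theta>p(1) by (simp add: field_simps)
    then show "norm (\<sigma> u / (\<theta> * p) - 1) \<le> r"
      using small[of u] u \<sigma>_0 \<theta>p(1) \<theta> by (simp add: dist_norm norm_divide norm_mult divide_le_eq)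
  qed (use d \<delta> radii \<alpha>_zero p holo_\<sigma> \<sigma>_0 \<theta> r in auto)
qed

theorem theorem4p3:
  fixes k :: nat and R1 R2 R :: real and U :: "(complex ^ 'n) set"
    and \<alpha> :: "complex \<times> (complex ^ 'n) \<Rightarrow> complex"
    and \<sigma> :: "complex ^ 'n \<Rightarrow> complex" and j :: int and p :: complex
  assumes "0 < R1" "R1 < R2" "R2 < R"
    and "open U" "0 \<in> U"
    and "holo_prod \<alpha> (ball 0 R \<times> U)"
    and "\<forall>z\<in>ball 0 R. \<alpha> (z, 0) = 0"
    and "R1 < cmod p" "cmod p < R2"
    and "holo_vec \<sigma> U" "\<forall>u\<in>U. \<sigma> u \<in> ball 0 R"
    and "\<sigma> 0 = exp (2 * pi * \<i> * of_int j / of_nat (k + 1)) * p"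
  shows "\<exists>U0 \<phi>. open U0 \<and> 0 \<in> U0 \<and> U0 \<subseteq> U \<and>
      holo_prod \<phi> ({z. R1 < cmod z \<and> cmod z < R2} \<times> U0) \<and>
      (\<forall>z\<in>{z. R1 < cmod z \<and> cmod z < R2}. \<forall>u\<in>U0. \<phi> (z, u) \<in> ball 0 R) \<and>
      (\<forall>u\<in>U0. \<forall>z\<in>{z. R1 < cmod z \<and> cmod z < R2}.
          \<phi> (z, u) \<noteq> 0 \<and>
          (\<phi> (z, u) ^ k + \<alpha> (\<phi> (z, u), u) / \<phi> (z, u)) * deriv (\<lambda>w. \<phi> (w, u)) z
            = z ^ k + \<alpha> (0, u) / z) \<and>
      (\<forall>z\<in>{z. R1 < cmod z \<and> cmod z < R2}.
          \<phi> (z, 0) = exp (2 * pi * \<i> * of_int j / of_nat (k + 1)) * z) \<and>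
      (\<forall>u\<in>U0. \<phi> (p, u) = \<sigma> u)"
proof -
  define \<theta> where "\<theta> = exp (2 * pi * \<i> * of_int j / of_nat (k + 1))"
  define \<rho> where "\<rho> = (R2 + R) / 2"
  have \<rho>_bounds: "R2 < \<rho>" "\<rho> < R" using assms(3) by (auto simp: \<rho>_def)
  obtain \<delta> where \<delta>: "0 < \<delta>" "ball 0 \<delta> \<subseteq> U" using openE[OF assms(4,5)] by metis
  interpret holomorphic_family \<alpha> R \<rho> \<delta> U
    using assms(1,2,4,6) \<rho>_bounds \<delta> by unfold_locales (auto simp: holo_prod_iff_holo_at)
  obtain r where r: "0 < r" "r \<le> 1/4" "R2 * (1 + r) < \<rho>"
    "\<And>h::complex. norm h \<le> r \<Longrightarrow> norm ((1 + h) ^ k - 1) \<le> 1/4"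
    by (rule exists_contraction_radius[where k=k, of R2 \<rho>]) (use assms(1,2) \<rho>_bounds in auto)
  obtain \<delta>1 where "annulus_setup \<alpha> R \<rho> \<delta> U k R1 R2 \<sigma> \<theta> p r \<delta>1"
    using exists_annulus_setup[of R1 R2 p \<sigma> \<theta> k r] assms(1,2,7-10,12) \<rho>_bounds r
      root_of_unity_exp[of j k] unfolding \<theta>_def holo_vec_iff_holo_at by blast
  then interpret annulus_setup \<alpha> R \<rho> \<delta> U k R1 R2 \<sigma> \<theta> p r \<delta>1 .
  show ?thesis
    using annulus_solution unfolding annulus_def \<theta>_def by blast
qed

end
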